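(* For every ProbeTop-$k$ instance $I$ with $k$ positions, the policy $\mathsf{ALG}_{\mathtt{ptk}}$ defined below (which is non-adaptive and committed) satisfies $$R_{\mathsf{ALG}_{\mathtt{ptk}}}(I)\ \ge\ \Big(1-\frac{e^{-k}k^k}{k!}\Big)\mathrm{LP}_{\mathtt{ptk}}(I)\ \ge\ \Big(1-\frac{e^{-k}k^k}{k!}\Big)\mathsf{OPT}_{\mathtt{ptk}}(I).$$ Policy $\mathsf{ALG}_{\mathtt{ptk}}$: take an optimal basic feasible solution $(x,y)$ of $\mathrm{LP}_{\mathtt{ptk}}(I)$. For each $i$ set $p_i=\sum_j x_{ij}/y_i$ and $v_i=\sum_j r_jx_{ij}/\sum_j x_{ij}$ (both $0$ if the denominator is $0$). Generate random $Y\in\{0,1\}^n$: $Y_i=y_i$ whenever $y_i\in\{0,1\}$; if exactly one $y_{i'}$ is fractional, $Y_{i'}=1$ with probability $y_{i'}$ and $0$ otherwise; if exactly two $y_{i_1},y_{i_2}$ are fractional (they then sum to 1), set $(Y_{i_1},Y_{i_2})=(1,0)$ with probability $y_{i_1}$ and $(0,1)$ otherwise. Interview the candidates with $Y_i=1$ in non-increasing order of $v_i$; when candidate $i$ is interviewed and $V_i=r_j$ is observed, if fewer than $k$ candidates have been hired, irrevocably hire $i$ with probability $x_{ij}/(y_iq_{ij})$ (independently of everything else), and otherwise reject $i$ permanently.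
   Context: ProbeTop-$k$ problem: integers $1\le k\le T\le n$; candidates $i\in[n]$ have independent nonnegative values $V_i\sim F_i$ supported on a finite set $\{r_1,\dots,r_J\}$, $q_{ij}=\mathbb{P}(V_i=r_j)$ known. A policy interviews at most $T$ candidates sequentially (interviewing $i$ reveals $V_i$) and hires at most $k$ interviewed candidates, receiving the sum of their values. A policy is non-adaptive if the interview order is fixed before any value is observed; it is committed if after each interview it must irrevocably decide whether to hire that candidate. $R_\pi(I)$ is the expected reward of policy $\pi$, $\mathsf{OPT}_{\mathtt{ptk}}(I)$ the supremum over all (adaptive, non-committed) policies. $\mathrm{LP}_{\mathtt{ptk}}(I)$: maximize $\sum_{i,j} r_jx_{ij}$ s.t. $x_{ij}\le y_iq_{ij}$; $\sum_i y_i\le T$; $\sum_{i,j}x_{ij}\le k$; $x_{ij}\ge0$; $0\le y_i\le1$. *)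

theory Defs
  imports "HOL-Probability.Probability"
begin

text \<open>A ProbeTop-k instance is given by parameters n T k J, values r j (j < J)
  and probabilities q i j = P(V_i = r j) (i < n, j < J).\<close>

definition valid_instance ::
  "nat \<Rightarrow> nat \<Rightarrow> nat \<Rightarrow> nat \<Rightarrow> (nat \<Rightarrow> real) \<Rightarrow> (nat \<Rightarrow> nat \<Rightarrow> real) \<Rightarrow> bool" where
  "valid_instance n T k J r q \<longleftrightarrow>
     1 \<le> k \<and> k \<le> T \<and> T \<le> n \<and> inj_on r {..<J} \<and> (\<forall>j<J. 0 \<le> r j) \<and>
     (\<forall>i<n. \<forall>j<J. 0 \<le> q i j) \<and> (\<forall>i<n. (\<Sum>j<J. q i j) = 1)"

datatype action = Interview nat | Stop "nat set"

type_synonym hist = "(nat \<times> real) list"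
type_synonym policy = "hist \<Rightarrow> action pmf"

text \<open>Reward of hiring the set H at the end (non-committed): valid iff H is a set of
  at most k interviewed candidates; invalid choices give reward 0.\<close>
definition stop_value :: "nat \<Rightarrow> hist \<Rightarrow> nat set \<Rightarrow> real" where
  "stop_value k h H = (if H \<subseteq> fst ` set h \<and> card H \<le> k
      then (\<Sum>i\<in>H. the (map_of h i)) else 0)"

text \<open>Expected reward of a (randomised, adaptive) policy from history h with
  fuel f = remaining interview budget. Invalid interview actions give reward 0.\<close>
primrec pol_eval :: "nat \<Rightarrow> nat \<Rightarrow> nat \<Rightarrow> nat \<Rightarrow> nat \<Rightarrow> (nat \<Rightarrow> real) \<Rightarrow>
    (nat \<Rightarrow> nat \<Rightarrow> real) \<Rightarrow> policy \<Rightarrow> hist \<Rightarrow> real" where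
  "pol_eval 0 n T k J r q \<pi> h =
     measure_pmf.expectation (\<pi> h)
       (\<lambda>a. case a of Stop H \<Rightarrow> stop_value k h H | Interview i \<Rightarrow> 0)"
| "pol_eval (Suc f) n T k J r q \<pi> h =
     measure_pmf.expectation (\<pi> h)
       (\<lambda>a. case a of Stop H \<Rightarrow> stop_value k h H
          | Interview i \<Rightarrow>
              (if i < n \<and> i \<notin> fst ` set h \<and> length h < T
               then (\<Sum>j<J. q i j * pol_eval f n T k J r q \<pi> (h @ [(i, r j)]))
               else 0))"

definition policy_reward ::
  "nat \<Rightarrow> nat \<Rightarrow> nat \<Rightarrow> nat \<Rightarrow> (nat \<Rightarrow> real) \<Rightarrow> (nat \<Rightarrow> nat \<Rightarrow> real) \<Rightarrow> policy \<Rightarrow> real" where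
  "policy_reward n T k J r q \<pi> = pol_eval T n T k J r q \<pi> []"

definition opt_ptk ::
  "nat \<Rightarrow> nat \<Rightarrow> nat \<Rightarrow> nat \<Rightarrow> (nat \<Rightarrow> real) \<Rightarrow> (nat \<Rightarrow> nat \<Rightarrow> real) \<Rightarrow> real" where
  "opt_ptk n T k J r q = (SUP \<pi>. policy_reward n T k J r q \<pi>)"

definition lp_feasible ::
  "nat \<Rightarrow> nat \<Rightarrow> nat \<Rightarrow> nat \<Rightarrow> (nat \<Rightarrow> nat \<Rightarrow> real) \<Rightarrow> (nat \<Rightarrow> nat \<Rightarrow> real) \<Rightarrow> (nat \<Rightarrow> real) \<Rightarrow> bool" where
  "lp_feasible n T k J q x y \<longleftrightarrow>
     (\<forall>i<n. 0 \<le> y i \<and> y i \<le> 1 \<and> (\<forall>j<J. 0 \<le> x i j \<and> x i j \<le> y i * q i j)) \<and>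
     (\<Sum>i<n. y i) \<le> real T \<and> (\<Sum>i<n. \<Sum>j<J. x i j) \<le> real k \<and>
     (\<forall>i j. n \<le> i \<or> J \<le> j \<longrightarrow> x i j = 0) \<and> (\<forall>i. n \<le> i \<longrightarrow> y i = 0)"

definition lp_obj :: "nat \<Rightarrow> nat \<Rightarrow> (nat \<Rightarrow> real) \<Rightarrow> (nat \<Rightarrow> nat \<Rightarrow> real) \<Rightarrow> real" where
  "lp_obj n J r x = (\<Sum>i<n. \<Sum>j<J. r j * x i j)"

definition lp_value ::
  "nat \<Rightarrow> nat \<Rightarrow> nat \<Rightarrow> nat \<Rightarrow> (nat \<Rightarrow> real) \<Rightarrow> (nat \<Rightarrow> nat \<Rightarrow> real) \<Rightarrow> real" where
  "lp_value n T k J r q = Sup {lp_obj n J r x | x y. lp_feasible n T k J q x y}"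

definition lp_optimal ::
  "nat \<Rightarrow> nat \<Rightarrow> nat \<Rightarrow> nat \<Rightarrow> (nat \<Rightarrow> real) \<Rightarrow> (nat \<Rightarrow> nat \<Rightarrow> real) \<Rightarrow>
   (nat \<Rightarrow> nat \<Rightarrow> real) \<Rightarrow> (nat \<Rightarrow> real) \<Rightarrow> bool" where
  "lp_optimal n T k J r q x y \<longleftrightarrow>
     lp_feasible n T k J q x y \<and>
     (\<forall>x' y'. lp_feasible n T k J q x' y' \<longrightarrow> lp_obj n J r x' \<le> lp_obj n J r x)"

definition lp_bfs ::
  "nat \<Rightarrow> nat \<Rightarrow> nat \<Rightarrow> nat \<Rightarrow> (nat \<Rightarrow> nat \<Rightarrow> real) \<Rightarrow> (nat \<Rightarrow> nat \<Rightarrow> real) \<Rightarrow> (nat \<Rightarrow> real) \<Rightarrow> bool" where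
  "lp_bfs n T k J q x y \<longleftrightarrow>
     lp_feasible n T k J q x y \<and>
     \<not> (\<exists>x1 y1 x2 y2. lp_feasible n T k J q x1 y1 \<and> lp_feasible n T k J q x2 y2 \<and>
          (x1, y1) \<noteq> (x2, y2) \<and>
          x = (\<lambda>i j. (x1 i j + x2 i j) / 2) \<and> y = (\<lambda>i. (y1 i + y2 i) / 2))"

definition alg_v :: "nat \<Rightarrow> (nat \<Rightarrow> real) \<Rightarrow> (nat \<Rightarrow> nat \<Rightarrow> real) \<Rightarrow> nat \<Rightarrow> real" where
  "alg_v J r x i = (let s = (\<Sum>j<J. x i j) in if s = 0 then 0 else (\<Sum>j<J. r j * x i j) / s)"

definition alg_p :: "nat \<Rightarrow> (nat \<Rightarrow> nat \<Rightarrow> real) \<Rightarrow> (nat \<Rightarrow> real) \<Rightarrow> nat \<Rightarrow> real" where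
  "alg_p J x y i = (if y i = 0 then 0 else (\<Sum>j<J. x i j) / y i)"

text \<open>Distribution of the set {i. Y_i = 1}.\<close>
definition alg_Y :: "nat \<Rightarrow> (nat \<Rightarrow> real) \<Rightarrow> nat set pmf" where
  "alg_Y n y = (let Fr = {i. i < n \<and> 0 < y i \<and> y i < 1}; B = {i. i < n \<and> y i = 1} in
     if card Fr = 0 then return_pmf B
     else if card Fr = 1 then
       map_pmf (\<lambda>b. if b then insert (Min Fr) B else B) (bernoulli_pmf (y (Min Fr)))
     else if card Fr = 2 then
       map_pmf (\<lambda>b. if b then insert (Min Fr) B else insert (Max Fr) B) (bernoulli_pmf (y (Min Fr)))
     else return_pmf {})"

definition alg_hire_prob ::
  "(nat \<Rightarrow> nat \<Rightarrow> real) \<Rightarrow> (nat \<Rightarrow> nat \<Rightarrow> real) \<Rightarrow> (nat \<Rightarrow> real) \<Rightarrow> nat \<Rightarrow> nat \<Rightarrow> real" where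
  "alg_hire_prob q x y i j = (if y i * q i j = 0 then 0 else x i j / (y i * q i j))"

text \<open>Expected reward collected when interviewing the list L in order, h hires made so far.\<close>
primrec alg_proc :: "nat \<Rightarrow> nat \<Rightarrow> (nat \<Rightarrow> real) \<Rightarrow> (nat \<Rightarrow> nat \<Rightarrow> real) \<Rightarrow>
    (nat \<Rightarrow> nat \<Rightarrow> real) \<Rightarrow> (nat \<Rightarrow> real) \<Rightarrow> nat list \<Rightarrow> nat \<Rightarrow> real" where
  "alg_proc k J r q x y [] h = 0"
| "alg_proc k J r q x y (i # L) h =
     (if h < k then
        (\<Sum>j<J. q i j * (alg_hire_prob q x y i j * (r j + alg_proc k J r q x y L (Suc h))
                        + (1 - alg_hire_prob q x y i j) * alg_proc k J r q x y L h))
      else alg_proc k J r q x y L h)"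

text \<open>An admissible interview order: for each selected set S, a listing of S in
  non-increasing order of v (ties broken arbitrarily).\<close>
definition alg_order_ok :: "nat \<Rightarrow> (nat \<Rightarrow> real) \<Rightarrow> (nat set \<Rightarrow> nat list) \<Rightarrow> bool" where
  "alg_order_ok n v \<sigma> \<longleftrightarrow>
     (\<forall>S. S \<subseteq> {..<n} \<longrightarrow> set (\<sigma> S) = S \<and> distinct (\<sigma> S) \<and> sorted_wrt (\<lambda>a b. v b \<le> v a) (\<sigma> S))"

definition alg_reward ::
  "nat \<Rightarrow> nat \<Rightarrow> nat \<Rightarrow> (nat \<Rightarrow> real) \<Rightarrow> (nat \<Rightarrow> nat \<Rightarrow> real) \<Rightarrow>
   (nat \<Rightarrow> nat \<Rightarrow> real) \<Rightarrow> (nat \<Rightarrow> real) \<Rightarrow> (nat set \<Rightarrow> nat list) \<Rightarrow> real" where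
  "alg_reward n k J r q x y \<sigma> =
     measure_pmf.expectation (alg_Y n y) (\<lambda>S. alg_proc k J r q x y (\<sigma> S) 0)"

end

theory Submission
  imports Defs
begin

text \<open>Every policy is relaxed by the LP: the probabilities \<open>x\<^sub>i\<^sub>j\<close> that it hires \<open>i\<close>
  with value \<open>r\<^sub>j\<close> and \<open>y\<^sub>i\<close> that it interviews \<open>i\<close> are LP-feasible and its reward is
  \<open>\<Sum> r\<^sub>j x\<^sub>i\<^sub>j\<close>, so \<open>OPT \<le> LP\<close>.

  A vertex of the LP has at most two fractional \<open>y\<^sub>i\<close>, and two of them sum to \<open>1\<close>, so the
  random interview set of ALG contains each \<open>i\<close> with probability \<open>y\<^sub>i\<close>. Once interviewed
  with room left, \<open>i\<close> is hired with probability \<open>p\<^sub>i\<close> and then contributes \<open>v\<^sub>i\<close> on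
  average, and \<open>LP = \<Sum> y\<^sub>i p\<^sub>i v\<^sub>i\<close>. Since the order is by decreasing \<open>v\<close>, splitting
  the values into thresholds reduces the claim to counting hires: committed greedy hiring with
  acceptance probabilities of total \<open>\<mu> \<le> k\<close> hires at least \<open>E min(Pois \<mu>, k)\<close> candidates
  (by concavity of this truncated Poisson mean), and that is at least
  \<open>(1 - e\<^sup>-\<^sup>k k\<^sup>k / k!) \<mu>\<close> (by comparison with its chord on \<open>[0, k]\<close>).\<close>

lemma valid_instance_q_nonneg: "valid_instance n T k J r q \<Longrightarrow> \<forall>i<n. \<forall>j<J. 0 \<le> q i j"
  and valid_instance_q_sum: "valid_instance n T k J r q \<Longrightarrow> \<forall>i<n. (\<Sum>j<J. q i j) = 1"
  and valid_instance_r_inj: "valid_instance n T k J r q \<Longrightarrow> inj_on r {..<J}"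
  and valid_instance_r_nonneg: "valid_instance n T k J r q \<Longrightarrow> \<forall>j<J. 0 \<le> r j"
  and valid_instance_k_pos: "valid_instance n T k J r q \<Longrightarrow> 0 < k"
  by (simp_all add: valid_instance_def)

section \<open>The truncated Poisson mean\<close>

abbreviation ptk_ratio :: "nat \<Rightarrow> real" where
  "ptk_ratio k \<equiv> 1 - exp (- real k) * real k ^ k / fact k"

text \<open>\<open>poisson_cdf m u\<close> is \<open>P(Pois u < m)\<close>, and \<open>poisson_trunc_mean m u\<close> is
  \<open>E min(Pois u, m) = \<Sum>l<m. P(Pois u > l)\<close>.\<close>

definition poisson_cdf :: "nat \<Rightarrow> real \<Rightarrow> real" where
  "poisson_cdf m u = (\<Sum>j<m. exp (- u) * u ^ j / fact j)"

definition poisson_trunc_mean :: "nat \<Rightarrow> real \<Rightarrow> real" where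
  "poisson_trunc_mean m u = (\<Sum>l<m. 1 - poisson_cdf (Suc l) u)"

lemma poisson_cdf_Suc_has_derivative:
  "(poisson_cdf (Suc l) has_real_derivative - (exp (- u) * u ^ l / fact l)) (at u)"
proof (induction l)
  case 0
  have "((\<lambda>u. exp (- u)) has_real_derivative exp (- u) * (- 1)) (at u)"
    by (auto intro!: derivative_eq_intros)
  then show ?case by (simp add: poisson_cdf_def)
next
  case (Suc l)
  have unfold: "poisson_cdf (Suc (Suc l)) = (\<lambda>u. poisson_cdf (Suc l) u + exp (- u) * u ^ Suc l / fact (Suc l))"
    by (auto simp: poisson_cdf_def)
  have summand: "((\<lambda>u. exp (- u) * u ^ Suc l / fact (Suc l)) has_real_derivative
      exp (- u) * u ^ l / fact l - exp (- u) * u ^ Suc l / fact (Suc l)) (at u)"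
  proof -
    have "((\<lambda>u. exp (- u) * u ^ Suc l / fact (Suc l)) has_real_derivative
        (exp (- u) * (- 1) * u ^ Suc l + exp (- u) * (real (Suc l) * u ^ l)) / fact (Suc l)) (at u)"
      by (rule derivative_eq_intros refl | simp)+
    moreover have "(exp (- u) * (- 1) * u ^ Suc l + exp (- u) * (real (Suc l) * u ^ l)) / fact (Suc l)
        = exp (- u) * u ^ l / fact l - exp (- u) * u ^ Suc l / fact (Suc l)"
      by (simp add: fact_Suc divide_simps)
    ultimately show ?thesis by simp
  qed
  show ?case
    unfolding unfold using DERIV_add[OF Suc summand] by simp
qed

lemma poisson_trunc_mean_has_derivative:
  "(poisson_trunc_mean m has_real_derivative poisson_cdf m u) (at u)"
proof (induction m)
  case 0
  then show ?case by (simp add: poisson_trunc_mean_def poisson_cdf_def)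
next
  case (Suc m)
  have "poisson_trunc_mean (Suc m) = (\<lambda>u. poisson_trunc_mean m u + (1 - poisson_cdf (Suc m) u))"
    by (auto simp: poisson_trunc_mean_def)
  moreover have "((\<lambda>u. poisson_trunc_mean m u + (1 - poisson_cdf (Suc m) u)) has_real_derivative
      poisson_cdf m u + (0 - - (exp (- u) * u ^ m / fact m))) (at u)"
    by (intro DERIV_add Suc DERIV_diff DERIV_const poisson_cdf_Suc_has_derivative)
  ultimately show ?case by (simp add: poisson_cdf_def)
qed

lemma poisson_cdf_antimono:
  assumes "0 \<le> a" "a \<le> b"
  shows "poisson_cdf m b \<le> poisson_cdf m a"
proof (cases m)
  case 0
  then show ?thesis by (simp add: poisson_cdf_def)
next
  case (Suc l)
  show ?thesis unfolding Suc
  proof (rule DERIV_nonpos_imp_nonincreasing[OF assms(2)])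
    fix u assume "a \<le> u" "u \<le> b"
    with assms have "0 \<le> u" by simp
    then show "\<exists>d. (poisson_cdf (Suc l) has_real_derivative d) (at u) \<and> d \<le> 0"
      using poisson_cdf_Suc_has_derivative by fastforce
  qed
qed

lemma poisson_trunc_mean_tangent:
  assumes "0 \<le> a" "0 \<le> b"
  shows "poisson_trunc_mean m b \<le> poisson_trunc_mean m a + (b - a) * poisson_cdf m a"
proof (cases a b rule: linorder_cases)
  case less
  obtain z where z: "a < z" "z < b"
    "poisson_trunc_mean m b - poisson_trunc_mean m a = (b - a) * poisson_cdf m z"
    using MVT2[OF less, of "poisson_trunc_mean m" "poisson_cdf m"]
      poisson_trunc_mean_has_derivative by blast
  have "poisson_cdf m z \<le> poisson_cdf m a"
    using poisson_cdf_antimono z assms by simp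
  then have "(b - a) * poisson_cdf m z \<le> (b - a) * poisson_cdf m a"
    using less by (simp add: mult_left_mono)
  with z show ?thesis by linarith
next
  case greater
  obtain z where z: "b < z" "z < a"
    "poisson_trunc_mean m a - poisson_trunc_mean m b = (a - b) * poisson_cdf m z"
    using MVT2[OF greater, of "poisson_trunc_mean m" "poisson_cdf m"]
      poisson_trunc_mean_has_derivative by blast
  have "poisson_cdf m a \<le> poisson_cdf m z"
    using poisson_cdf_antimono z assms by simp
  then have "(a - b) * poisson_cdf m a \<le> (a - b) * poisson_cdf m z"
    using greater by (simp add: mult_left_mono)
  with z show ?thesis by (simp add: algebra_simps)
qed simp

lemma poisson_cdf_Suc_0 [simp]: "poisson_cdf (Suc l) 0 = 1"
  by (induction l) (simp_all add: poisson_cdf_def)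

lemma poisson_trunc_mean_0 [simp]: "poisson_trunc_mean m 0 = 0"
  by (simp add: poisson_trunc_mean_def)

lemma poisson_trunc_mean_Suc:
  "poisson_trunc_mean (Suc m) u = poisson_trunc_mean m u + 1 - poisson_cdf (Suc m) u"
  by (simp add: poisson_trunc_mean_def)

lemma sum_poisson_cdf:
  "(\<Sum>l<m. poisson_cdf (Suc l) u) = exp (- u) * (\<Sum>j<m. (real m - real j) * u ^ j / fact j)"
proof (induction m)
  case (Suc m)
  have "(\<Sum>j<Suc m. (real (Suc m) - real j) * u ^ j / fact j)
      = (\<Sum>j<Suc m. (real m - real j) * u ^ j / fact j + u ^ j / fact j)"
    by (intro sum.cong) (auto simp: field_simps)
  also have "\<dots> = (\<Sum>j<m. (real m - real j) * u ^ j / fact j) + (\<Sum>j<Suc m. u ^ j / fact j)"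
    by (simp add: sum.distrib)
  finally show ?case
    using Suc by (simp add: poisson_cdf_def sum_distrib_left distrib_left)
qed simp

lemma sum_poisson_weights_telescope:
  "(\<Sum>j<m. (K - real j) * K ^ j / fact j) = real m * K ^ m / fact m"
proof (induction m)
  case (Suc m)
  have "real m * K ^ m / fact m + (K - real m) * K ^ m / fact m = K * K ^ m / fact m"
    by (simp add: add_divide_distrib[symmetric] algebra_simps)
  also have "\<dots> = real (Suc m) * K ^ Suc m / fact (Suc m)"
    by (simp add: fact_Suc)
  finally show ?case using Suc by simp
qed simp

lemma poisson_trunc_mean_self:
  "poisson_trunc_mean k (real k) = real k * ptk_ratio k"
proof -
  have "poisson_trunc_mean k (real k) = real k - (\<Sum>l<k. poisson_cdf (Suc l) (real k))"
    by (simp add: poisson_trunc_mean_def sum_subtractf)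
  also have "\<dots> = real k - exp (- real k) * (real k * real k ^ k / fact k)"
    by (simp add: sum_poisson_cdf sum_poisson_weights_telescope)
  finally show ?thesis by (simp add: algebra_simps)
qed

lemma poisson_trunc_mean_ge_chord:
  assumes "0 < k" "0 \<le> u" "u \<le> real k"
  shows "ptk_ratio k * u \<le> poisson_trunc_mean k u"
proof -
  let ?g = "poisson_trunc_mean k" and ?d = "poisson_cdf k u"
  have "?g (real k) \<le> ?g u + (real k - u) * ?d"
    using poisson_trunc_mean_tangent assms by simp
  moreover have "?g 0 \<le> ?g u + (0 - u) * ?d"
    using poisson_trunc_mean_tangent[of u 0 k] assms by simp
  ultimately have "u * ?g (real k) + (real k - u) * ?g 0
      \<le> u * (?g u + (real k - u) * ?d) + (real k - u) * (?g u + (0 - u) * ?d)"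
    using assms by (intro add_mono mult_left_mono) auto
  then have "real k * (ptk_ratio k * u) \<le> real k * ?g u"
    by (simp add: poisson_trunc_mean_self algebra_simps)
  with assms show ?thesis by simp
qed

lemma ptk_ratio_nonneg: "0 \<le> ptk_ratio k"
proof -
  have "poisson_cdf (Suc k) (real k) \<le> 1"
    using poisson_cdf_antimono[of 0 "real k" "Suc k"] by simp
  moreover have "0 \<le> poisson_cdf k (real k)"
    by (simp add: poisson_cdf_def sum_nonneg)
  moreover have "poisson_cdf (Suc k) (real k) = poisson_cdf k (real k) + exp (- real k) * real k ^ k / fact k"
    by (simp add: poisson_cdf_def)
  ultimately have "exp (- real k) * real k ^ k / fact k \<le> 1"
    by linarith
  then show ?thesis by simp
qed

section \<open>Committed greedy hiring along a list\<close>

text \<open>Candidates are scanned in list order and the current one is hired with the given probability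
  as long as fewer than \<open>k\<close> have been hired; \<open>h\<close> counts the hires so far. \<open>expected_hires\<close>
  counts the hires, \<open>expected_reward\<close> sums the values \<open>v\<close> of the hired candidates.\<close>

primrec expected_hires :: "nat \<Rightarrow> real list \<Rightarrow> nat \<Rightarrow> real" where
  "expected_hires k [] h = 0"
| "expected_hires k (u # ps) h =
     (if h < k then u * (1 + expected_hires k ps (Suc h)) + (1 - u) * expected_hires k ps h
      else expected_hires k ps h)"

primrec expected_reward :: "nat \<Rightarrow> (nat \<Rightarrow> real) \<Rightarrow> (nat \<Rightarrow> real) \<Rightarrow> nat list \<Rightarrow> nat \<Rightarrow> real" where
  "expected_reward k p v [] h = 0"
| "expected_reward k p v (i # L) h =
     (if h < k then p i * (v i + expected_reward k p v L (Suc h)) + (1 - p i) * expected_reward k p v L h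
      else expected_reward k p v L h)"

definition expected_hires_gain :: "nat \<Rightarrow> real list \<Rightarrow> nat \<Rightarrow> real" where
  "expected_hires_gain k ps h = (if h < k then 1 + expected_hires k ps (Suc h) - expected_hires k ps h else 0)"

lemma expected_hires_Cons:
  "expected_hires k (u # ps) h = expected_hires k ps h + u * expected_hires_gain k ps h"
  by (simp add: expected_hires_gain_def algebra_simps)

text \<open>Poissonisation: by the tangent inequality, adding a candidate raises the truncated
  Poisson mean by at most what it adds to the expected number of hires.\<close>

lemma expected_hires_ge_poisson:
  assumes "\<forall>u\<in>set ps. 0 \<le> u \<and> u \<le> 1"
  shows "poisson_trunc_mean (k - h) (sum_list ps) \<le> expected_hires k ps h"
  using assms
proof (induction ps arbitrary: h)
  case Nil
  then show ?case by simp
next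
  case (Cons u ps)
  have u: "0 \<le> u" "u \<le> 1" and s: "0 \<le> sum_list ps"
    using Cons.prems by (auto intro: sum_list_nonneg)
  show ?case
  proof (cases "h < k")
    case True
    then obtain m where m: "k - h = Suc m" "k - Suc h = m"
      by (metis Suc_diff_Suc)
    have "poisson_trunc_mean (Suc m) (u + sum_list ps)
        \<le> poisson_trunc_mean (Suc m) (sum_list ps) + u * poisson_cdf (Suc m) (sum_list ps)"
      using poisson_trunc_mean_tangent[of "sum_list ps" "u + sum_list ps" "Suc m"] s u by simp
    also have "\<dots> = u * (1 + poisson_trunc_mean m (sum_list ps)) + (1 - u) * poisson_trunc_mean (Suc m) (sum_list ps)"
      by (simp add: poisson_trunc_mean_Suc algebra_simps)
    also have "\<dots> \<le> u * (1 + expected_hires k ps (Suc h)) + (1 - u) * expected_hires k ps h"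
      using Cons.IH[of "Suc h"] Cons.IH[of h] Cons.prems m u by (intro add_mono mult_left_mono) auto
    finally show ?thesis
      using True m by simp
  next
    case False
    then show ?thesis
      using Cons.IH[of h] Cons.prems by (simp add: poisson_trunc_mean_def)
  qed
qed

lemma expected_hires_ge_ratio:
  assumes "\<forall>u\<in>set ps. 0 \<le> u \<and> u \<le> 1" "sum_list ps \<le> real k" "0 < k"
  shows "ptk_ratio k * sum_list ps \<le> expected_hires k ps 0"
  using poisson_trunc_mean_ge_chord[OF assms(3) _ assms(2)] expected_hires_ge_poisson[OF assms(1), of k 0]
    assms(1) by (simp add: sum_list_nonneg)

lemma expected_hires_remove1:
  "a \<in> set ps \<Longrightarrow> expected_hires k ps h = expected_hires k (a # remove1 a ps) h"
proof (induction ps arbitrary: h)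
  case (Cons b ps)
  show ?case
  proof (cases "a = b")
    case False
    with Cons have "expected_hires k (b # ps) h = expected_hires k (b # a # remove1 a ps) h"
      by simp
    also have "\<dots> = expected_hires k (a # b # remove1 a ps) h"
      by (simp add: algebra_simps)
    finally show ?thesis
      using False by simp
  qed simp
qed simp

lemma expected_hires_perm:
  "mset ps = mset ps' \<Longrightarrow> expected_hires k ps h = expected_hires k ps' h"
proof (induction ps arbitrary: ps' h)
  case (Cons a ps)
  then have "a \<in> set ps'"
    by (metis list.set_intros(1) set_mset_mset)
  then have "expected_hires k ps' h = expected_hires k (a # remove1 a ps') h"
    by (rule expected_hires_remove1)
  also have "\<dots> = expected_hires k (a # ps) h"
    using Cons.IH[of "remove1 a ps'"] by (simp add: mset_remove1 Cons.prems[symmetric])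
  finally show ?case by simp
qed simp

lemma expected_reward_add_scaled:
  "expected_reward k p (\<lambda>i. c * v1 i + v2 i) L h = c * expected_reward k p v1 L h + expected_reward k p v2 L h"
  by (induction L arbitrary: h) (simp_all add: algebra_simps)

lemma expected_reward_cong:
  "(\<And>i. i \<in> set L \<Longrightarrow> v1 i = v2 i) \<Longrightarrow> expected_reward k p v1 L h = expected_reward k p v2 L h"
  by (induction L arbitrary: h) simp_all

lemma expected_reward_zero:
  "(\<And>i. i \<in> set L \<Longrightarrow> v i = 0) \<Longrightarrow> expected_reward k p v L h = 0"
  by (induction L arbitrary: h) simp_all

text \<open>On a list sorted by decreasing value, the candidates above a threshold form a prefix.\<close>

lemma expected_reward_threshold_indicator:
  fixes v :: "nat \<Rightarrow> 'a::linorder"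
  assumes "sorted_wrt (\<lambda>a b. v b \<le> v a) L"
  shows "expected_reward k p (\<lambda>i. if t \<le> v i then 1 else 0) L h
       = expected_hires k (map p (filter (\<lambda>i. t \<le> v i) L)) h"
  using assms
proof (induction L arbitrary: h)
  case (Cons i L)
  show ?case
  proof (cases "t \<le> v i")
    case False
    have below: "\<not> t \<le> v j" if "j \<in> set L" for j
    proof -
      from Cons.prems that have "v j \<le> v i" by simp
      also from False have "v i < t" by (simp add: not_le)
      finally show ?thesis by (simp add: not_le)
    qed
    then have "expected_reward k p (\<lambda>i. if t \<le> v i then 1 else 0) L h' = 0" for h'
      by (intro expected_reward_zero) auto
    moreover have "filter (\<lambda>i. t \<le> v i) L = []"
      using below by (simp add: filter_empty_conv)
    ultimately show ?thesis
      using False by simp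
  qed (use Cons in simp)
qed simp

definition shift_down :: "real \<Rightarrow> (nat \<Rightarrow> real) \<Rightarrow> nat \<Rightarrow> real" where
  "shift_down t v i = (if t \<le> v i then v i - t else v i)"

lemma expected_reward_threshold_split:
  assumes "sorted_wrt (\<lambda>a b. v b \<le> v a) L"
  shows "expected_reward k p v L h
       = t * expected_hires k (map p (filter (\<lambda>i. t \<le> v i) L)) h + expected_reward k p (shift_down t v) L h"
proof -
  have "expected_reward k p v L h
      = expected_reward k p (\<lambda>i. t * (if t \<le> v i then 1 else 0) + shift_down t v i) L h"
    by (intro expected_reward_cong) (simp add: shift_down_def)
  then show ?thesis
    by (simp only: expected_reward_add_scaled expected_reward_threshold_indicator[OF assms])
qed

lemma sorted_wrt_shift_down:
  assumes "sorted_wrt (\<lambda>a b. v b \<le> v a) L" "\<And>i. i \<in> set L \<Longrightarrow> \<not> t \<le> v i \<Longrightarrow> v i = 0"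
  shows "sorted_wrt (\<lambda>a b. shift_down t v b \<le> shift_down t v a) L"
proof (rule sorted_wrt_mono_rel[OF _ assms(1)])
  fix i j assume ij: "i \<in> set L" "j \<in> set L" "v j \<le> v i"
  show "shift_down t v j \<le> shift_down t v i"
  proof (cases "t \<le> v j")
    case True
    with ij(3) show ?thesis
      by (simp add: shift_down_def)
  next
    case False
    with assms(2)[OF ij(2)] have "v j = 0"
      by blast
    with False ij(3) show ?thesis
      by (simp add: shift_down_def)
  qed
qed

lemma card_nonzero_shift_down_less:
  assumes "i0 < n" "v i0 = t" "0 < t"
  shows "card {i. i < n \<and> shift_down t v i \<noteq> 0} < card {i. i < n \<and> v i \<noteq> 0}"
proof (rule psubset_card_mono)
  have "{i. i < n \<and> shift_down t v i \<noteq> 0} \<subseteq> {i. i < n \<and> v i \<noteq> 0} - {i0}"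
  proof
    fix i assume "i \<in> {i. i < n \<and> shift_down t v i \<noteq> 0}"
    then have "i < n" "shift_down t v i \<noteq> 0" by auto
    moreover have "v i \<noteq> 0"
      using \<open>shift_down t v i \<noteq> 0\<close> assms(3) unfolding shift_down_def by (cases "t \<le> v i") auto
    moreover have "shift_down t v i0 = 0"
      using assms(2) by (simp add: shift_down_def)
    then have "i \<noteq> i0"
      using \<open>shift_down t v i \<noteq> 0\<close> by blast
    ultimately show "i \<in> {i. i < n \<and> v i \<noteq> 0} - {i0}"
      by simp
  qed
  moreover have "i0 \<in> {i. i < n \<and> v i \<noteq> 0}"
    using assms by simp
  ultimately show "{i. i < n \<and> shift_down t v i \<noteq> 0} \<subset> {i. i < n \<and> v i \<noteq> 0}"
    by blast
qed simp

text \<open>The weighted lists \<open>Ls\<close> stand for a distribution over interview orders. A bound on the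
  expected number of hires among every set of candidates lifts to a bound on the expected reward:
  peel off the smallest positive value \<open>t\<close>, which contributes \<open>t\<close> times the hires among the
  candidates of value \<open>\<ge> t\<close>, and recurse on the remaining values.\<close>

lemma expected_reward_ge_of_hires:
  fixes Ls :: "(real \<times> nat list) list"
  assumes sub: "\<And>w L. (w, L) \<in> set Ls \<Longrightarrow> set L \<subseteq> {..<n}"
    and hires: "\<And>P. c * (\<Sum>i<n. if P i then a i else 0)
                  \<le> (\<Sum>(w, L)\<leftarrow>Ls. w * expected_hires k (map p (filter P L)) 0)"
    and nonneg: "\<And>i. i < n \<Longrightarrow> 0 \<le> v i"
    and sorted: "\<And>w L. (w, L) \<in> set Ls \<Longrightarrow> sorted_wrt (\<lambda>a b. v b \<le> v a) L"
  shows "c * (\<Sum>i<n. a i * v i) \<le> (\<Sum>(w, L)\<leftarrow>Ls. w * expected_reward k p v L 0)"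
  using nonneg sorted
proof (induction "card {i. i < n \<and> v i \<noteq> 0}" arbitrary: v rule: less_induct)
  case less
  define Pos where "Pos = {i. i < n \<and> v i \<noteq> 0}"
  show ?case
  proof (cases "Pos = {}")
    case True
    then have "v i = 0" if "i < n" for i
      using that by (auto simp: Pos_def)
    with sub have "expected_reward k p v L 0 = 0" if "(w, L) \<in> set Ls" for w L
      using that by (intro expected_reward_zero) auto
    then have "(\<Sum>(w, L)\<leftarrow>Ls. w * expected_reward k p v L 0) = (\<Sum>_\<leftarrow>Ls. 0)"
      by (intro arg_cong[where f = sum_list] map_cong) auto
    with \<open>\<And>i. i < n \<Longrightarrow> v i = 0\<close> show ?thesis by simp
  next
    case False
    define t where "t = Min (v ` Pos)"
    have "t \<in> v ` Pos"
      unfolding t_def using False by (intro Min_in) (auto simp: Pos_def)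
    then obtain i0 where i0: "i0 < n" "v i0 \<noteq> 0" "v i0 = t"
      by (auto simp: Pos_def)
    have t_pos: "0 < t"
      using i0 less.prems(1) by force
    have "t \<le> v i" if "i \<in> Pos" for i
      using that by (auto simp: t_def Pos_def)
    then have zero_below: "v i = 0" if "i < n" "\<not> t \<le> v i" for i
      using that by (auto simp: Pos_def)
    have IH: "c * (\<Sum>i<n. a i * shift_down t v i) \<le> (\<Sum>(w, L)\<leftarrow>Ls. w * expected_reward k p (shift_down t v) L 0)"
    proof (rule less.hyps[OF card_nonzero_shift_down_less[of i0 n v t, OF i0(1,3) t_pos]])
      show "0 \<le> shift_down t v i" if "i < n" for i
        using less.prems(1)[OF that] by (simp add: shift_down_def)
      show "sorted_wrt (\<lambda>a b. shift_down t v b \<le> shift_down t v a) L" if "(w, L) \<in> set Ls" for w L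
        by (rule sorted_wrt_shift_down[OF less.prems(2)[OF that]]) (use zero_below sub[OF that] in blast)
    qed
    let ?hires = "\<lambda>L. expected_hires k (map p (filter (\<lambda>i. t \<le> v i) L)) 0"
    have "a i * v i = t * (if t \<le> v i then a i else 0) + a i * shift_down t v i" for i
      by (simp add: shift_down_def algebra_simps)
    then have "c * (\<Sum>i<n. a i * v i)
        = t * (c * (\<Sum>i<n. if t \<le> v i then a i else 0)) + c * (\<Sum>i<n. a i * shift_down t v i)"
      by (simp add: sum.distrib sum_distrib_left algebra_simps)
    also have "\<dots> \<le> t * (\<Sum>(w, L)\<leftarrow>Ls. w * ?hires L) + (\<Sum>(w, L)\<leftarrow>Ls. w * expected_reward k p (shift_down t v) L 0)"
      using hires IH t_pos by (intro add_mono mult_left_mono) auto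
    also have "\<dots> = (\<Sum>(w, L)\<leftarrow>Ls. w * (t * ?hires L + expected_reward k p (shift_down t v) L 0))"
      by (induction Ls) (auto simp: algebra_simps)
    also have "\<dots> = (\<Sum>(w, L)\<leftarrow>Ls. w * expected_reward k p v L 0)"
      using expected_reward_threshold_split[OF less.prems(2), of _ _ k p 0 t]
      by (intro arg_cong[where f = sum_list] map_cong) auto
    finally show ?thesis .
  qed
qed

section \<open>Basic feasible solutions have at most two fractional interview variables\<close>

definition fractional :: "nat \<Rightarrow> (nat \<Rightarrow> real) \<Rightarrow> nat set" where
  "fractional n y = {i. i < n \<and> 0 < y i \<and> y i < 1}"

definition ones :: "nat \<Rightarrow> (nat \<Rightarrow> real) \<Rightarrow> nat set" where
  "ones n y = {i. i < n \<and> y i = 1}"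

lemma finite_fractional [simp]: "finite (fractional n y)"
  by (simp add: fractional_def)

lemma lp_feasibleD:
  assumes "lp_feasible n T k J q x y"
  shows "i < n \<Longrightarrow> 0 \<le> y i" and "i < n \<Longrightarrow> y i \<le> 1"
    and "i < n \<Longrightarrow> j < J \<Longrightarrow> 0 \<le> x i j" and "i < n \<Longrightarrow> j < J \<Longrightarrow> x i j \<le> y i * q i j"
  using assms by (auto simp: lp_feasible_def)

lemma lp_value_eq_lp_obj:
  assumes "lp_optimal n T k J r q x y"
  shows "lp_value n T k J r q = lp_obj n J r x"
  unfolding lp_value_def
  by (rule cSup_eq_maximum) (use assms in \<open>auto simp: lp_optimal_def\<close>)

lemma lp_feasible_perturbation:
  assumes feas: "lp_feasible n T k J q x y"
    and small: "\<And>i. i < n \<Longrightarrow> \<bar>d * e i\<bar> \<le> 1 - y i"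
    and hires: "(\<Sum>i<n. e i * (\<Sum>j<J. x i j)) = 0"
    and interviews: "d * (\<Sum>i<n. e i * y i) \<le> real T - (\<Sum>i<n. y i)"
  shows "lp_feasible n T k J q (\<lambda>i j. x i j * (1 + d * e i)) (\<lambda>i. y i * (1 + d * e i))"
proof -
  have y: "0 \<le> y i" "y i \<le> 1" and x: "\<forall>j<J. 0 \<le> x i j \<and> x i j \<le> y i * q i j" if "i < n" for i
    using feas that by (auto simp: lp_feasible_def)
  have factor: "0 \<le> 1 + d * e i" "y i * (1 + d * e i) \<le> 1" if "i < n" for i
  proof -
    have "y i * (d * e i) \<le> y i * \<bar>d * e i\<bar>"
      using y[OF that] by (intro mult_left_mono) auto
    also have "\<dots> \<le> \<bar>d * e i\<bar>"
      using y[OF that] by (intro mult_left_le_one_le) auto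
    finally have "y i * (d * e i) \<le> \<bar>d * e i\<bar>" .
    then show "0 \<le> 1 + d * e i" "y i * (1 + d * e i) \<le> 1"
      using small[OF that] y[OF that] abs_ge_minus_self[of "d * e i"] by (simp_all add: algebra_simps)
  qed
  have "x i j * (1 + d * e i) \<le> y i * (1 + d * e i) * q i j" if "i < n" "j < J" for i j
    using x[OF that(1)] factor[OF that(1)] that(2) mult_right_mono[of "x i j" "y i * q i j" "1 + d * e i"]
    by (simp add: algebra_simps)
  moreover have "(\<Sum>i<n. \<Sum>j<J. x i j * (1 + d * e i)) = (\<Sum>i<n. \<Sum>j<J. x i j) + d * (\<Sum>i<n. e i * (\<Sum>j<J. x i j))"
    by (simp add: algebra_simps sum.distrib sum_distrib_left sum_distrib_right)
  moreover have "(\<Sum>i<n. y i * (1 + d * e i)) = (\<Sum>i<n. y i) + d * (\<Sum>i<n. e i * y i)"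
    by (simp add: algebra_simps sum.distrib sum_distrib_left)
  ultimately show ?thesis
    using feas factor x y hires interviews by (auto simp: lp_feasible_def)
qed

lemma lp_bfs_midpoint:
  assumes "lp_bfs n T k J q x y" "lp_feasible n T k J q x1 y1" "lp_feasible n T k J q x2 y2"
    and "x = (\<lambda>i j. (x1 i j + x2 i j) / 2)" "y = (\<lambda>i. (y1 i + y2 i) / 2)"
  shows "(x1, y1) = (x2, y2)"
  using assms unfolding lp_bfs_def by blast

lemma exists_small_step:
  fixes y e :: "nat \<Rightarrow> real"
  assumes "finite F" "F \<noteq> {}" "\<And>i. i \<in> F \<Longrightarrow> y i < 1" "0 < s"
  obtains \<delta> where "0 < \<delta>" "\<And>i. i \<in> F \<Longrightarrow> \<delta> * \<bar>e i\<bar> \<le> 1 - y i" "\<delta> * c \<le> s"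
proof -
  define m where "m = Min ((\<lambda>i. 1 - y i) ` F)"
  have "0 < m"
    unfolding m_def using assms by (subst Min_gr_iff) auto
  have m_le: "m \<le> 1 - y i" if "i \<in> F" for i
    using assms(1) that by (simp add: m_def)
  define E where "E = (\<Sum>i\<in>F. \<bar>e i\<bar>) + \<bar>c\<bar> + 1"
  have "1 \<le> E" "\<bar>c\<bar> \<le> E"
    by (simp_all add: E_def sum_nonneg)
  have e_le: "\<bar>e i\<bar> \<le> E" if "i \<in> F" for i
    using member_le_sum[OF that, of "\<lambda>i. \<bar>e i\<bar>"] assms(1) by (simp add: E_def)
  define \<delta> where "\<delta> = min m s / E"
  have "0 < \<delta>" and \<delta>E: "\<delta> * E = min m s"
    using \<open>0 < m\<close> assms(4) \<open>1 \<le> E\<close> by (simp_all add: \<delta>_def)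
  show thesis
  proof (rule that[OF \<open>0 < \<delta>\<close>])
    show "\<delta> * \<bar>e i\<bar> \<le> 1 - y i" if "i \<in> F" for i
      using mult_left_mono[OF e_le[OF that], of \<delta>] \<open>0 < \<delta>\<close> \<delta>E m_le[OF that] by linarith
    show "\<delta> * c \<le> s"
      using mult_left_mono[OF \<open>\<bar>c\<bar> \<le> E\<close>, of \<delta>] mult_left_mono[OF abs_ge_self[of c], of \<delta>]
        \<open>0 < \<delta>\<close> \<delta>E by linarith
  qed
qed

text \<open>A vertex admits no perturbation that scales the fractional candidates up and down
  while keeping both budgets: both directions stay feasible for small steps, and the vertex
  would be their midpoint.\<close>

lemma lp_bfs_no_perturbation:
  assumes bfs: "lp_bfs n T k J q x y"
    and support: "\<And>i. e i \<noteq> 0 \<Longrightarrow> i \<in> fractional n y"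
    and nonzero: "e i0 \<noteq> 0"
    and hires: "(\<Sum>i<n. e i * (\<Sum>j<J. x i j)) = 0"
    and interviews: "(\<Sum>i<n. e i * y i) = 0 \<or> (\<Sum>i<n. y i) < real T"
  shows False
proof -
  have feas: "lp_feasible n T k J q x y"
    using bfs by (simp add: lp_bfs_def)
  define F where "F = {i. e i \<noteq> 0}"
  have "F \<subseteq> fractional n y"
    using support by (auto simp: F_def)
  then have "finite F" "F \<noteq> {}" and y_lt: "\<And>i. i \<in> F \<Longrightarrow> y i < 1"
    using nonzero by (auto simp: F_def fractional_def intro: finite_subset)
  define SE where "SE = (\<Sum>i<n. e i * y i)"
  define s where "s = (if SE = 0 then 1 else real T - (\<Sum>i<n. y i))"
  have "0 < s"
    using interviews by (auto simp: s_def SE_def)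
  obtain \<delta> where "0 < \<delta>" and small: "\<And>i. i \<in> F \<Longrightarrow> \<delta> * \<bar>e i\<bar> \<le> 1 - y i" and "\<delta> * \<bar>SE\<bar> \<le> s"
    using exists_small_step[where y = y and e = e and c = "\<bar>SE\<bar>", OF \<open>finite F\<close> \<open>F \<noteq> {}\<close> y_lt \<open>0 < s\<close>] by blast
  have step_feasible: "lp_feasible n T k J q (\<lambda>i j. x i j * (1 + d * e i)) (\<lambda>i. y i * (1 + d * e i))"
    if "\<bar>d\<bar> = \<delta>" for d
  proof (rule lp_feasible_perturbation[OF feas _ hires])
    fix i assume "i < n"
    show "\<bar>d * e i\<bar> \<le> 1 - y i"
      using small[of i] that lp_feasibleD(2)[OF feas \<open>i < n\<close>] by (cases "i \<in> F") (auto simp: F_def abs_mult)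
  next
    have "d * SE \<le> \<bar>d\<bar> * \<bar>SE\<bar>"
      by (metis abs_ge_self abs_mult)
    with that \<open>\<delta> * \<bar>SE\<bar> \<le> s\<close> feas show "d * (\<Sum>i<n. e i * y i) \<le> real T - (\<Sum>i<n. y i)"
      by (cases "SE = 0") (auto simp: s_def SE_def lp_feasible_def)
  qed
  have "x = (\<lambda>i j. (x i j * (1 + \<delta> * e i) + x i j * (1 + - \<delta> * e i)) / 2)"
    and "y = (\<lambda>i. (y i * (1 + \<delta> * e i) + y i * (1 + - \<delta> * e i)) / 2)"
    by (simp_all add: algebra_simps)
  from lp_bfs_midpoint[OF bfs step_feasible step_feasible this] \<open>0 < \<delta>\<close>
  have "(\<lambda>i. y i * (1 + \<delta> * e i)) = (\<lambda>i. y i * (1 + - \<delta> * e i))"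
    by simp
  from fun_cong[OF this, of i0] show False
    using support[OF nonzero] \<open>0 < \<delta>\<close> nonzero by (auto simp: fractional_def)
qed

lemma sum_three_points:
  fixes g :: "nat \<Rightarrow> real"
  assumes "a < n" "b < n" "c < n" "a \<noteq> b" "a \<noteq> c" "b \<noteq> c"
  shows "(\<Sum>i<n. (if i = a then u else if i = b then v else if i = c then w else 0) * g i)
       = u * g a + v * g b + w * g c"
proof -
  have "(\<Sum>i<n. (if i = a then u else if i = b then v else if i = c then w else 0) * g i)
      = (\<Sum>i<n. (if i = a then u * g a else 0) + (if i = b then v * g b else 0) + (if i = c then w * g c else 0))"
    using assms by (intro sum.cong) auto
  also have "\<dots> = u * g a + v * g b + w * g c"
    using assms by (simp add: sum.distrib)
  finally show ?thesis .
qed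

text \<open>Three fractional candidates would leave a direction orthogonal to both the
  \<open>x\<close>-mass vector and the \<open>y\<close>-vector on them (their cross product, or a vector
  orthogonal to \<open>y\<close> if the two are parallel).\<close>

lemma lp_bfs_card_fractional:
  assumes bfs: "lp_bfs n T k J q x y"
  shows "card (fractional n y) \<le> 2"
proof (rule ccontr)
  assume "\<not> card (fractional n y) \<le> 2"
  then have "3 \<le> card (fractional n y)"
    by simp
  then obtain S where "S \<subseteq> fractional n y" "card S = 3"
    by (meson obtain_subset_with_card_n)
  then obtain a b c where abc: "a \<in> fractional n y" "b \<in> fractional n y" "c \<in> fractional n y"
    "a \<noteq> b" "a \<noteq> c" "b \<noteq> c"
    by (auto simp: card_3_iff)
  then have lt: "a < n" "b < n" "c < n" and ya: "0 < y a"
    by (auto simp: fractional_def)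
  define s where "s = (\<lambda>i. \<Sum>j<J. x i j)"
  define c1 where "c1 = y b * s c - y c * s b"
  define c2 where "c2 = y c * s a - y a * s c"
  define c3 where "c3 = y a * s b - y b * s a"
  define parallel where "parallel \<longleftrightarrow> c1 = 0 \<and> c2 = 0 \<and> c3 = 0"
  define e where "e = (\<lambda>i. if parallel then (if i = a then y b else if i = b then - y a else 0)
    else (if i = a then c1 else if i = b then c2 else if i = c then c3 else 0))"
  have "e a \<noteq> 0 \<or> e b \<noteq> 0 \<or> e c \<noteq> 0"
    using abc(4-6) ya by (auto simp: e_def parallel_def)
  then obtain i0 where "e i0 \<noteq> 0"
    by blast
  moreover have "e i \<noteq> 0 \<Longrightarrow> i \<in> fractional n y" for i
    using abc by (auto simp: e_def split: if_splits)
  moreover have "e = (\<lambda>i. if i = a then e a else if i = b then e b else if i = c then e c else 0)"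
    using abc(4-6) by (auto simp: e_def)
  then have "(\<Sum>i<n. e i * g i) = e a * g a + e b * g b + e c * g c" for g
    using sum_three_points[OF lt abc(4-6), of "e a" "e b" "e c" g] by metis
  then have "(\<Sum>i<n. e i * s i) = 0" "(\<Sum>i<n. e i * y i) = 0"
    using abc(4-6) by (auto simp: e_def parallel_def c1_def c2_def c3_def algebra_simps)
  ultimately show False
    using lp_bfs_no_perturbation[OF bfs] unfolding s_def by blast
qed

lemma lp_bfs_interviews_tight:
  assumes bfs: "lp_bfs n T k J q x y"
    and ab: "a \<in> fractional n y" "b \<in> fractional n y" "a \<noteq> b"
  shows "(\<Sum>i<n. y i) = real T"
proof (rule ccontr)
  assume "(\<Sum>i<n. y i) \<noteq> real T"
  moreover have "(\<Sum>i<n. y i) \<le> real T"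
    using bfs by (simp add: lp_bfs_def lp_feasible_def)
  ultimately have slack: "(\<Sum>i<n. y i) < real T"
    by simp
  have lt: "a < n" "b < n"
    using ab by (auto simp: fractional_def)
  define s where "s = (\<lambda>i. \<Sum>j<J. x i j)"
  define u where "u = (if s a = 0 \<and> s b = 0 then 1 else s b)"
  define v where "v = (if s a = 0 \<and> s b = 0 then 0 else - s a)"
  define e where "e = (\<lambda>i. if i = a then u else if i = b then v else 0)"
  have "e a \<noteq> 0 \<or> e b \<noteq> 0"
    using ab(3) by (auto simp: e_def u_def v_def)
  then obtain i0 where "e i0 \<noteq> 0"
    by blast
  moreover have "e i \<noteq> 0 \<Longrightarrow> i \<in> fractional n y" for i
    using ab by (auto simp: e_def split: if_splits)
  moreover have "(\<Sum>i<n. e i * s i) = (\<Sum>i<n. (if i = a then u * s a else 0) + (if i = b then v * s b else 0))"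
    using ab(3) by (intro sum.cong) (auto simp: e_def)
  then have "(\<Sum>i<n. e i * s i) = 0"
    using lt by (simp add: sum.distrib u_def v_def)
  ultimately show False
    using lp_bfs_no_perturbation[OF bfs] slack unfolding s_def by blast
qed

lemma lp_feasible_sum_y:
  assumes "lp_feasible n T k J q x y"
  shows "(\<Sum>i<n. y i) = real (card (ones n y)) + (\<Sum>i\<in>fractional n y. y i)"
proof -
  have "y i = (if i \<in> ones n y then 1 else 0) + (if i \<in> fractional n y then y i else 0)" if "i < n" for i
    using assms that by (auto simp: lp_feasible_def ones_def fractional_def)
  then have "(\<Sum>i<n. y i) = (\<Sum>i<n. (if i \<in> ones n y then 1 else 0) + (if i \<in> fractional n y then y i else 0))"
    by (intro sum.cong) auto
  also have "\<dots> = real (card ({..<n} \<inter> ones n y)) + (\<Sum>i\<in>{..<n} \<inter> fractional n y. y i)"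
    by (simp add: sum.distrib sum.If_cases)
  also have "{..<n} \<inter> ones n y = ones n y"
    by (auto simp: ones_def)
  also have "{..<n} \<inter> fractional n y = fractional n y"
    by (auto simp: fractional_def)
  finally show ?thesis .
qed

text \<open>Two fractional values sum to an integer in \<open>(0, 2)\<close>, because the interview
  budget is tight.\<close>

lemma lp_bfs_fractional_pair:
  assumes bfs: "lp_bfs n T k J q x y"
    and two: "fractional n y = {a, b}" "a \<noteq> b"
  shows "y a + y b = 1"
proof -
  have "y a + y b = real T - real (card (ones n y))"
    using lp_feasible_sum_y[of n T k J q x y] lp_bfs_interviews_tight[OF bfs _ _ two(2)] bfs two
    by (simp add: lp_bfs_def)
  then have z: "y a + y b = of_int (int T - int (card (ones n y)))"
    by simp
  have "a \<in> fractional n y" "b \<in> fractional n y"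
    using two by auto
  then have "0 < y a + y b" "y a + y b < 2"
    by (auto simp: fractional_def)
  with z have "int T - int (card (ones n y)) = 1"
    by linarith
  with z show ?thesis
    by simp
qed

section \<open>Expectations of general payoffs under a policy\<close>

definition bounded_payoff :: "(hist \<Rightarrow> nat set \<Rightarrow> real) \<Rightarrow> bool" where
  "bounded_payoff \<phi> \<longleftrightarrow> (\<forall>h. \<exists>B. \<forall>H. \<bar>\<phi> h H\<bar> \<le> B)"

lemma integrable_action_case:
  fixes M :: "action pmf" and F :: "nat \<Rightarrow> real"
  assumes "bounded_payoff \<phi>" "finite (range F)"
  shows "integrable (measure_pmf M) (\<lambda>a. case a of Stop H \<Rightarrow> \<phi> h H | Interview i \<Rightarrow> F i)"
proof -
  obtain B where B: "\<And>H. \<bar>\<phi> h H\<bar> \<le> B"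
    using assms(1) by (auto simp: bounded_payoff_def)
  obtain B' where B': "\<And>i. \<bar>F i\<bar> \<le> B'"
    using finite_imp_bounded[OF assms(2)] by (auto simp: bounded_iff)
  have "0 \<le> B" "0 \<le> B'"
    using B[of "{}"] B'[of 0] by linarith+
  with B B' have "\<bar>case a of Stop H \<Rightarrow> \<phi> h H | Interview i \<Rightarrow> F i\<bar> \<le> B + B'" for a
    by (cases a) (auto intro: add_increasing add_increasing2)
  then show ?thesis
    by (intro measure_pmf.integrable_const_bound[where B = "B + B'"]) auto
qed

lemma finite_range_if_below:
  fixes G :: "nat \<Rightarrow> 'a"
  shows "finite (range (\<lambda>i. if i < n \<and> P i then G i else c))"
  by (rule finite_subset[of _ "insert c (G ` {..<n})"]) auto

context
  fixes n T J :: nat and r :: "nat \<Rightarrow> real" and q :: "nat \<Rightarrow> nat \<Rightarrow> real" and \<pi> :: policy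
begin

text \<open>With \<open>\<phi> = stop_value k\<close> and
  \<open>\<psi> = 0\<close> this is \<open>pol_eval\<close>; indicator payoffs give the probabilities of the events the LP
  constraints speak about.\<close>

primrec policy_expectation :: "nat \<Rightarrow> (hist \<Rightarrow> nat set \<Rightarrow> real) \<Rightarrow> (hist \<Rightarrow> real) \<Rightarrow> hist \<Rightarrow> real" where
  "policy_expectation 0 \<phi> \<psi> h =
     measure_pmf.expectation (\<pi> h) (\<lambda>a. case a of Stop H \<Rightarrow> \<phi> h H | Interview i \<Rightarrow> \<psi> h)"
| "policy_expectation (Suc f) \<phi> \<psi> h =
     measure_pmf.expectation (\<pi> h) (\<lambda>a. case a of Stop H \<Rightarrow> \<phi> h H
       | Interview i \<Rightarrow> (if i < n \<and> i \<notin> fst ` set h \<and> length h < T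
                         then (\<Sum>j<J. q i j * policy_expectation f \<phi> \<psi> (h @ [(i, r j)])) else \<psi> h))"

lemma policy_expectation_mono:
  assumes q_nonneg: "\<forall>i<n. \<forall>j<J. 0 \<le> q i j"
    and inv: "\<And>h i j. Inv h \<Longrightarrow> i < n \<Longrightarrow> i \<notin> fst ` set h \<Longrightarrow> length h < T \<Longrightarrow> j < J \<Longrightarrow> Inv (h @ [(i, r j)])"
    and le_stop: "\<And>h H. Inv h \<Longrightarrow> \<phi>1 h H \<le> \<phi>2 h H"
    and le_invalid: "\<And>h. Inv h \<Longrightarrow> \<psi>1 h \<le> \<psi>2 h"
    and bounded: "bounded_payoff \<phi>1" "bounded_payoff \<phi>2"
    and "Inv h"
  shows "policy_expectation f \<phi>1 \<psi>1 h \<le> policy_expectation f \<phi>2 \<psi>2 h"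
  using \<open>Inv h\<close>
proof (induction f arbitrary: h)
  case 0
  then show ?case
    unfolding policy_expectation.simps using le_stop le_invalid
    by (intro integral_mono integrable_action_case bounded) (auto split: action.splits)
next
  case (Suc f)
  show ?case unfolding policy_expectation.simps
  proof (intro integral_mono integrable_action_case bounded finite_range_if_below)
    fix a
    show "(case a of Stop H \<Rightarrow> \<phi>1 h H | Interview i \<Rightarrow> if i < n \<and> i \<notin> fst ` set h \<and> length h < T
        then \<Sum>j<J. q i j * policy_expectation f \<phi>1 \<psi>1 (h @ [(i, r j)]) else \<psi>1 h)
      \<le> (case a of Stop H \<Rightarrow> \<phi>2 h H | Interview i \<Rightarrow> if i < n \<and> i \<notin> fst ` set h \<and> length h < T
        then \<Sum>j<J. q i j * policy_expectation f \<phi>2 \<psi>2 (h @ [(i, r j)]) else \<psi>2 h)"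
      using Suc.IH[OF inv[OF Suc.prems]] Suc.prems le_stop le_invalid q_nonneg
      by (auto split: action.splits intro!: sum_mono mult_left_mono)
  qed
qed

lemma policy_expectation_const:
  assumes "\<forall>i<n. (\<Sum>j<J. q i j) = 1"
  shows "policy_expectation f (\<lambda>h H. c) (\<lambda>h. c) h = c"
proof (induction f arbitrary: h)
  case 0
  have "(\<lambda>a. case a of Stop H \<Rightarrow> c | Interview i \<Rightarrow> c) = (\<lambda>a. c)"
    by (auto split: action.splits)
  then show ?case by simp
next
  case (Suc f)
  have "(\<Sum>j<J. q i j * c) = c" if "i < n" for i
    using assms that by (simp add: sum_distrib_right[symmetric])
  then have "(\<lambda>a. case a of Stop H \<Rightarrow> c | Interview i \<Rightarrow> if i < n \<and> i \<notin> fst ` set h \<and> length h < T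
        then \<Sum>j<J. q i j * policy_expectation f (\<lambda>h H. c) (\<lambda>h. c) (h @ [(i, r j)]) else c) = (\<lambda>a. c)"
    by (auto simp: Suc split: action.splits)
  then show ?case by simp
qed

lemma bounded_payoff_const: "bounded_payoff (\<lambda>h H. c)"
  unfolding bounded_payoff_def by blast

lemma policy_expectation_le_const:
  assumes "\<forall>i<n. \<forall>j<J. 0 \<le> q i j" "\<forall>i<n. (\<Sum>j<J. q i j) = 1"
    and "\<And>h i j. Inv h \<Longrightarrow> i < n \<Longrightarrow> i \<notin> fst ` set h \<Longrightarrow> length h < T \<Longrightarrow> j < J \<Longrightarrow> Inv (h @ [(i, r j)])"
    and "\<And>h H. Inv h \<Longrightarrow> \<phi> h H \<le> c" "\<And>h. Inv h \<Longrightarrow> \<psi> h \<le> c"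
    and "bounded_payoff \<phi>" "Inv h"
  shows "policy_expectation f \<phi> \<psi> h \<le> c"
  using policy_expectation_mono[OF assms(1,3-6) bounded_payoff_const assms(7)]
    policy_expectation_const[OF assms(2)] by simp

lemma policy_expectation_ge_const:
  assumes "\<forall>i<n. \<forall>j<J. 0 \<le> q i j" "\<forall>i<n. (\<Sum>j<J. q i j) = 1"
    and "\<And>h i j. Inv h \<Longrightarrow> i < n \<Longrightarrow> i \<notin> fst ` set h \<Longrightarrow> length h < T \<Longrightarrow> j < J \<Longrightarrow> Inv (h @ [(i, r j)])"
    and "\<And>h H. Inv h \<Longrightarrow> c \<le> \<phi> h H" "\<And>h. Inv h \<Longrightarrow> c \<le> \<psi> h"
    and "bounded_payoff \<phi>" "Inv h"
  shows "c \<le> policy_expectation f \<phi> \<psi> h"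
  using policy_expectation_mono[OF assms(1,3-5) bounded_payoff_const assms(6,7)]
    policy_expectation_const[OF assms(2)] by simp

lemma policy_expectation_scale:
  "policy_expectation f (\<lambda>h H. c * \<phi> h H) (\<lambda>h. c * \<psi> h) h = c * policy_expectation f \<phi> \<psi> h"
proof (induction f arbitrary: h)
  case 0
  have "(\<lambda>a. case a of Stop H \<Rightarrow> c * \<phi> h H | Interview i \<Rightarrow> c * \<psi> h)
      = (\<lambda>a. c * (case a of Stop H \<Rightarrow> \<phi> h H | Interview i \<Rightarrow> \<psi> h))"
    by (auto split: action.splits)
  then show ?case by simp
next
  case (Suc f)
  have "(\<lambda>a. case a of Stop H \<Rightarrow> c * \<phi> h H | Interview i \<Rightarrow> if i < n \<and> i \<notin> fst ` set h \<and> length h < T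
        then \<Sum>j<J. q i j * policy_expectation f (\<lambda>h H. c * \<phi> h H) (\<lambda>h. c * \<psi> h) (h @ [(i, r j)]) else c * \<psi> h)
      = (\<lambda>a. c * (case a of Stop H \<Rightarrow> \<phi> h H | Interview i \<Rightarrow> if i < n \<and> i \<notin> fst ` set h \<and> length h < T
        then \<Sum>j<J. q i j * policy_expectation f \<phi> \<psi> (h @ [(i, r j)]) else \<psi> h))"
    by (auto simp: Suc sum_distrib_left algebra_simps split: action.splits)
  then show ?case by simp
qed

lemma policy_expectation_sum:
  assumes "finite M" "\<forall>m\<in>M. bounded_payoff (\<phi> m)"
  shows "policy_expectation f (\<lambda>h H. \<Sum>m\<in>M. \<phi> m h H) (\<lambda>h. \<Sum>m\<in>M. \<psi> m h) h
       = (\<Sum>m\<in>M. policy_expectation f (\<phi> m) (\<psi> m) h)"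
proof (induction f arbitrary: h)
  case 0
  have "(\<lambda>a. case a of Stop H \<Rightarrow> \<Sum>m\<in>M. \<phi> m h H | Interview i \<Rightarrow> \<Sum>m\<in>M. \<psi> m h)
      = (\<lambda>a. \<Sum>m\<in>M. (case a of Stop H \<Rightarrow> \<phi> m h H | Interview i \<Rightarrow> \<psi> m h))"
    by (auto split: action.splits)
  then show ?case
    using assms by (simp add: integrable_action_case)
next
  case (Suc f)
  let ?valid = "\<lambda>i. i < n \<and> i \<notin> fst ` set h \<and> length h < T"
  have "(\<lambda>a. case a of Stop H \<Rightarrow> \<Sum>m\<in>M. \<phi> m h H | Interview i \<Rightarrow> if ?valid i
        then \<Sum>j<J. q i j * policy_expectation f (\<lambda>h H. \<Sum>m\<in>M. \<phi> m h H) (\<lambda>h. \<Sum>m\<in>M. \<psi> m h) (h @ [(i, r j)])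
        else \<Sum>m\<in>M. \<psi> m h)
      = (\<lambda>a. \<Sum>m\<in>M. (case a of Stop H \<Rightarrow> \<phi> m h H | Interview i \<Rightarrow> if ?valid i
        then \<Sum>j<J. q i j * policy_expectation f (\<phi> m) (\<psi> m) (h @ [(i, r j)]) else \<psi> m h))"
    (is "(\<lambda>a. ?lhs a) = (\<lambda>a. ?rhs a)")
  proof
    fix a
    show "?lhs a = ?rhs a"
    proof (cases a)
      case (Interview i)
      show ?thesis
      proof (cases "?valid i")
        case True
        then show ?thesis
          using Interview by (simp add: Suc sum_distrib_left sum.swap[of _ M])
      next
        case False
        then have "(\<Sum>m\<in>M. \<psi> m h) = (\<Sum>m\<in>M. (if ?valid i
            then \<Sum>j<J. q i j * policy_expectation f (\<phi> m) (\<psi> m) (h @ [(i, r j)]) else \<psi> m h))"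
          by (intro sum.cong) auto
        then show ?thesis
          unfolding Interview action.case if_not_P[OF False] .
      qed
    qed simp
  qed
  then show ?case unfolding policy_expectation.simps
    by (simp only:) (rule Bochner_Integration.integral_sum,
        use assms in \<open>auto intro: integrable_action_case finite_range_if_below\<close>)
qed

end

lemma policy_expectation_sum_stop:
  "finite M \<Longrightarrow> \<forall>m\<in>M. bounded_payoff (\<phi> m) \<Longrightarrow>
   policy_expectation n T J r q \<pi> f (\<lambda>h H. \<Sum>m\<in>M. \<phi> m h H) (\<lambda>h. 0) h
   = (\<Sum>m\<in>M. policy_expectation n T J r q \<pi> f (\<phi> m) (\<lambda>h. 0) h)"
  using policy_expectation_sum[of M \<phi> n T J r q \<pi> f "\<lambda>m h. 0" h] by simp

lemma policy_expectation_scale_stop: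
  "policy_expectation n T J r q \<pi> f (\<lambda>h H. c * \<phi> h H) (\<lambda>h. 0) h
   = c * policy_expectation n T J r q \<pi> f \<phi> (\<lambda>h. 0) h"
  using policy_expectation_scale[of n T J r q \<pi> f c \<phi> "\<lambda>h. 0" h] by simp

section \<open>Every policy is dominated by the LP\<close>

definition feasible_hist :: "nat \<Rightarrow> nat \<Rightarrow> nat \<Rightarrow> (nat \<Rightarrow> real) \<Rightarrow> hist \<Rightarrow> bool" where
  "feasible_hist n T J r h \<longleftrightarrow> (\<forall>(i, u)\<in>set h. i < n \<and> u \<in> r ` {..<J}) \<and> length h \<le> T"

lemma feasible_hist_Nil: "feasible_hist n T J r []"
  by (simp add: feasible_hist_def)

lemma feasible_hist_snoc:
  "feasible_hist n T J r h \<Longrightarrow> i < n \<Longrightarrow> length h < T \<Longrightarrow> j < J \<Longrightarrow> feasible_hist n T J r (h @ [(i, r j)])"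
  by (auto simp: feasible_hist_def)

lemma pol_eval_eq_policy_expectation:
  "pol_eval f n T k J r q \<pi> h = policy_expectation n T J r q \<pi> f (stop_value k) (\<lambda>h. 0) h"
  by (induction f arbitrary: h) (simp_all only: pol_eval.simps policy_expectation.simps)

lemma bounded_payoff_sum:
  assumes "finite M" "\<forall>m\<in>M. bounded_payoff (\<phi> m)"
  shows "bounded_payoff (\<lambda>h H. \<Sum>m\<in>M. \<phi> m h H)"
  unfolding bounded_payoff_def
proof
  fix h
  from assms have "\<forall>m\<in>M. \<exists>B. \<forall>H. \<bar>\<phi> m h H\<bar> \<le> B"
    unfolding bounded_payoff_def by blast
  then obtain B where B: "\<forall>m\<in>M. \<forall>H. \<bar>\<phi> m h H\<bar> \<le> B m"
    by metis
  have "\<bar>\<Sum>m\<in>M. \<phi> m h H\<bar> \<le> (\<Sum>m\<in>M. B m)" for H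
    using B by (intro order_trans[OF sum_abs sum_mono]) auto
  then show "\<exists>B. \<forall>H. \<bar>\<Sum>m\<in>M. \<phi> m h H\<bar> \<le> B" by blast
qed

lemma bounded_payoff_scale: "bounded_payoff \<phi> \<Longrightarrow> bounded_payoff (\<lambda>h H. c * \<phi> h H)"
  unfolding bounded_payoff_def
proof
  fix h assume "\<forall>h. \<exists>B. \<forall>H. \<bar>\<phi> h H\<bar> \<le> B"
  then obtain B where "\<forall>H. \<bar>\<phi> h H\<bar> \<le> B" by blast
  then have "\<bar>c * \<phi> h H\<bar> \<le> \<bar>c\<bar> * B" for H
    by (simp add: abs_mult mult_left_mono)
  then show "\<exists>B. \<forall>H. \<bar>c * \<phi> h H\<bar> \<le> B" by blast
qed

lemma bounded_payoff_indicator: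
  assumes "\<And>h H. \<phi> h H \<in> {0, 1}"
  shows "bounded_payoff \<phi>"
proof -
  have "\<bar>\<phi> h H\<bar> \<le> 1" for h H
    using assms[of h H] by auto
  then show ?thesis
    unfolding bounded_payoff_def by blast
qed

lemma bounded_payoff_stop_value: "bounded_payoff (stop_value k)"
  unfolding bounded_payoff_def
proof
  fix h :: hist
  have "\<bar>stop_value k h H\<bar> \<le> (\<Sum>i\<in>fst ` set h. \<bar>the (map_of h i)\<bar>)" for H
  proof (cases "H \<subseteq> fst ` set h \<and> card H \<le> k")
    case True
    then have "\<bar>stop_value k h H\<bar> \<le> (\<Sum>i\<in>H. \<bar>the (map_of h i)\<bar>)"
      by (simp add: stop_value_def sum_abs)
    also have "\<dots> \<le> (\<Sum>i\<in>fst ` set h. \<bar>the (map_of h i)\<bar>)"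
      using True by (intro sum_mono2) auto
    finally show ?thesis .
  qed (auto simp: stop_value_def intro: sum_nonneg)
  then show "\<exists>B. \<forall>H. \<bar>stop_value k h H\<bar> \<le> B" by blast
qed

text \<open>The events whose probabilities are the LP variables of a policy: \<open>x\<^sub>i\<^sub>j\<close> is the
  probability that \<open>i\<close> is hired with value \<open>r j\<close>, \<open>y\<^sub>i\<close> the probability that \<open>i\<close> is
  interviewed.\<close>

definition hired_with_value :: "nat \<Rightarrow> (nat \<Rightarrow> real) \<Rightarrow> nat \<Rightarrow> nat \<Rightarrow> hist \<Rightarrow> nat set \<Rightarrow> real" where
  "hired_with_value k r i j h H =
     (if H \<subseteq> fst ` set h \<and> card H \<le> k \<and> i \<in> H \<and> map_of h i = Some (r j) then 1 else 0)"

definition interviewed :: "nat \<Rightarrow> hist \<Rightarrow> real" where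
  "interviewed i h = (if i \<in> fst ` set h then 1 else 0)"

lemma bounded_payoff_hired_with_value: "bounded_payoff (hired_with_value k r i j)"
  by (rule bounded_payoff_indicator) (simp add: hired_with_value_def)

lemma bounded_payoff_interviewed: "bounded_payoff (\<lambda>h H. interviewed i h)"
  by (rule bounded_payoff_indicator) (simp add: interviewed_def)

lemma hired_with_value_eq_0:
  "\<not> (H \<subseteq> fst ` set h \<and> card H \<le> k \<and> i \<in> H) \<Longrightarrow> hired_with_value k r i j h H = 0"
  unfolding hired_with_value_def by (rule if_not_P) blast

lemma sum_value_indicator:
  fixes g :: "real \<Rightarrow> real"
  assumes "feasible_hist n T J r h" "i \<in> fst ` set h" "inj_on r {..<J}"
  shows "(\<Sum>j<J. g (r j) * (if map_of h i = Some (r j) then 1 else 0)) = g (the (map_of h i))"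
proof -
  obtain u0 where "(i, u0) \<in> set h"
    using assms(2) by auto
  from weak_map_of_SomeI[OF this] obtain u where u: "map_of h i = Some u"
    by blast
  then have "(i, u) \<in> set h"
    by (rule map_of_SomeD)
  with assms(1) obtain j0 where j0: "j0 < J" "u = r j0"
    by (auto simp: feasible_hist_def)
  have "map_of h i = Some (r j) \<longleftrightarrow> j = j0" if "j < J" for j
  proof -
    have "map_of h i = Some (r j) \<longleftrightarrow> r j = r j0"
      using u j0(2) by auto
    also have "\<dots> \<longleftrightarrow> j = j0"
      by (rule inj_on_eq_iff[OF assms(3)]) (use that j0(1) in auto)
    finally show ?thesis .
  qed
  then have "(\<Sum>j<J. g (r j) * (if map_of h i = Some (r j) then 1 else 0))
      = (\<Sum>j<J. if j = j0 then g (r j0) else 0)"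
    by (intro sum.cong) auto
  with j0 u show ?thesis
    by simp
qed

lemma sum_hired_with_value:
  fixes g :: "real \<Rightarrow> real"
  assumes "feasible_hist n T J r h" "inj_on r {..<J}"
  shows "(\<Sum>j<J. g (r j) * hired_with_value k r i j h H)
       = (if H \<subseteq> fst ` set h \<and> card H \<le> k \<and> i \<in> H then g (the (map_of h i)) else 0)"
proof (cases "H \<subseteq> fst ` set h \<and> card H \<le> k \<and> i \<in> H")
  case True
  then have "i \<in> fst ` set h" by auto
  from True have "hired_with_value k r i j h H = (if map_of h i = Some (r j) then 1 else 0)" for j
    by (simp add: hired_with_value_def)
  with True show ?thesis
    by (simp add: sum_value_indicator[OF assms(1) \<open>i \<in> fst ` set h\<close> assms(2)])
next
  case False
  then show ?thesis
    unfolding if_not_P[OF False] by (simp add: hired_with_value_eq_0)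
qed

lemma stop_value_eq_sum_hired_with_value:
  assumes "feasible_hist n T J r h" "inj_on r {..<J}"
  shows "stop_value k h H = (\<Sum>i<n. \<Sum>j<J. r j * hired_with_value k r i j h H)"
proof (cases "H \<subseteq> fst ` set h \<and> card H \<le> k")
  case True
  with assms(1) have "H \<subseteq> {..<n}"
    by (force simp: feasible_hist_def)
  have "(\<Sum>i<n. \<Sum>j<J. r j * hired_with_value k r i j h H) = (\<Sum>i<n. if i \<in> H then the (map_of h i) else 0)"
    using True sum_hired_with_value[OF assms, of "\<lambda>u. u"] by simp
  also have "\<dots> = (\<Sum>i\<in>H. the (map_of h i))"
    using \<open>H \<subseteq> {..<n}\<close> by (simp add: sum.If_cases Int_absorb1)
  finally show ?thesis
    using True by (simp add: stop_value_def)
next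
  case False
  then have "hired_with_value k r i j h H = 0" for i j
    by (intro hired_with_value_eq_0) blast
  with False show ?thesis
    unfolding stop_value_def if_not_P[OF False] by simp
qed

lemma sum_hired_with_value_le:
  assumes "feasible_hist n T J r h" "inj_on r {..<J}"
  shows "(\<Sum>i<n. \<Sum>j<J. hired_with_value k r i j h H) \<le> real k"
proof (cases "H \<subseteq> fst ` set h \<and> card H \<le> k")
  case True
  have "(\<Sum>i<n. \<Sum>j<J. hired_with_value k r i j h H) = (\<Sum>i<n. if i \<in> H then 1 else 0)"
    using True sum_hired_with_value[OF assms, of "\<lambda>_. 1"] by simp
  also have "\<dots> = real (card ({..<n} \<inter> H))"
    by (simp add: sum.If_cases)
  also have "\<dots> \<le> real (card H)"
    using True by (intro of_nat_mono card_mono) (auto intro: finite_subset)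
  finally show ?thesis
    using True by simp
next
  case False
  then have "hired_with_value k r i j h H = 0" for i j
    by (intro hired_with_value_eq_0) blast
  then show ?thesis by simp
qed

lemma sum_interviewed_le:
  assumes "feasible_hist n T J r h"
  shows "(\<Sum>i<n. interviewed i h) \<le> real T"
proof -
  have "(\<Sum>i<n. interviewed i h) = real (card ({..<n} \<inter> fst ` set h))"
    by (simp add: interviewed_def sum.If_cases)
  also have "\<dots> \<le> real (card (fst ` set h))"
    by (intro of_nat_mono card_mono) auto
  also have "\<dots> \<le> real (length h)"
    by (metis card_image_le card_length finite_set le_trans of_nat_mono)
  also have "\<dots> \<le> real T"
    using assms by (simp add: feasible_hist_def)
  finally show ?thesis .
qed

context
  fixes n T k J :: nat and r :: "nat \<Rightarrow> real" and q :: "nat \<Rightarrow> nat \<Rightarrow> real"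
  assumes valid: "valid_instance n T k J r q"
begin

abbreviation hire_prob :: "policy \<Rightarrow> nat \<Rightarrow> nat \<Rightarrow> nat \<Rightarrow> hist \<Rightarrow> real" where
  "hire_prob \<pi> f i j h \<equiv> policy_expectation n T J r q \<pi> f (hired_with_value k r i j) (\<lambda>h. 0) h"

abbreviation interview_prob :: "policy \<Rightarrow> nat \<Rightarrow> nat \<Rightarrow> hist \<Rightarrow> real" where
  "interview_prob \<pi> f i h \<equiv> policy_expectation n T J r q \<pi> f (\<lambda>h H. interviewed i h) (interviewed i) h"

lemma hire_prob_nonneg: "0 \<le> hire_prob \<pi> f i j h"
  by (rule policy_expectation_ge_const[where Inv = "\<lambda>_. True", OF valid_instance_q_nonneg[OF valid] valid_instance_q_sum[OF valid] _ _ _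
        bounded_payoff_hired_with_value]) (auto simp: hired_with_value_def)

lemma hire_prob_le_1: "hire_prob \<pi> f i j h \<le> 1"
  by (rule policy_expectation_le_const[where Inv = "\<lambda>_. True", OF valid_instance_q_nonneg[OF valid] valid_instance_q_sum[OF valid] _ _ _
        bounded_payoff_hired_with_value]) (auto simp: hired_with_value_def)

lemma interview_prob_nonneg: "0 \<le> interview_prob \<pi> f i h"
  by (rule policy_expectation_ge_const[where Inv = "\<lambda>_. True", OF valid_instance_q_nonneg[OF valid] valid_instance_q_sum[OF valid] _ _ _
        bounded_payoff_interviewed]) (auto simp: interviewed_def)

lemma interview_prob_le_1: "interview_prob \<pi> f i h \<le> 1"
  by (rule policy_expectation_le_const[where Inv = "\<lambda>_. True", OF valid_instance_q_nonneg[OF valid] valid_instance_q_sum[OF valid] _ _ _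
        bounded_payoff_interviewed]) (auto simp: interviewed_def)

lemma interview_prob_after_interview: "1 \<le> interview_prob \<pi> f i (h @ [(i, u)])"
  by (rule policy_expectation_ge_const[where Inv = "\<lambda>h. i \<in> fst ` set h", OF valid_instance_q_nonneg[OF valid] valid_instance_q_sum[OF valid] _ _ _
        bounded_payoff_interviewed]) (auto simp: interviewed_def)

lemma hire_prob_after_other_value:
  assumes "i \<notin> fst ` set h" "j < J" "j' < J" "j' \<noteq> j"
  shows "hire_prob \<pi> f i j (h @ [(i, r j')]) = 0"
proof -
  let ?Inv = "\<lambda>h. map_of h i = Some (r j')"
  have "r j' \<noteq> r j"
    using assms(2-4) valid_instance_r_inj[OF valid] by (auto dest: inj_onD)
  then have "hired_with_value k r i j h' H = 0" if "?Inv h'" for h' H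
    using that by (simp add: hired_with_value_def)
  moreover have "map_of h i = None"
    using assms(1) by (simp add: map_of_eq_None_iff)
  then have "?Inv (h @ [(i, r j')])"
    by (simp add: map_add_def)
  moreover have "?Inv (h' @ [(i', r j'')])" if "?Inv h'" for h' i' j''
    using that by simp
  ultimately show ?thesis
    using policy_expectation_le_const[where Inv = ?Inv and c = 0, OF valid_instance_q_nonneg[OF valid] valid_instance_q_sum[OF valid]]
      hire_prob_nonneg[of \<pi> f i j "h @ [(i, r j')]"] bounded_payoff_hired_with_value
    by (metis order.antisym order_refl)
qed

text \<open>Interviewing \<open>i\<close> itself: it reveals value \<open>r j\<close> with probability \<open>q i j\<close>, which
  bounds the hiring probability, while \<open>i\<close> then counts as interviewed for sure.\<close>

lemma hire_prob_after_interview_le: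
  assumes "i < n" "j < J" "i \<notin> fst ` set h"
  shows "(\<Sum>j'<J. q i j' * hire_prob \<pi> f i j (h @ [(i, r j')]))
       \<le> q i j * (\<Sum>j'<J. q i j' * interview_prob \<pi> f i (h @ [(i, r j')]))"
proof -
  have "(\<Sum>j'<J. q i j' * hire_prob \<pi> f i j (h @ [(i, r j')])) \<le> (\<Sum>j'<J. q i j' * (if j' = j then 1 else 0))"
    using hire_prob_le_1 hire_prob_after_other_value[OF assms(3,2)] valid_instance_q_nonneg[OF valid] assms(1)
    by (intro sum_mono mult_left_mono) auto
  also have "\<dots> = q i j"
    using assms(2) by (simp add: if_distrib[of "\<lambda>x. q i _ * x"] cong: if_cong)
  also have "\<dots> = q i j * (\<Sum>j'<J. q i j' * 1)"
    using assms(1) valid_instance_q_sum[OF valid] by simp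
  also have "\<dots> \<le> q i j * (\<Sum>j'<J. q i j' * interview_prob \<pi> f i (h @ [(i, r j')]))"
    using interview_prob_after_interview valid_instance_q_nonneg[OF valid] assms
    by (intro mult_left_mono sum_mono) auto
  finally show ?thesis .
qed

lemma hire_prob_le_interview_prob:
  assumes "i < n" "j < J"
  shows "i \<notin> fst ` set h \<Longrightarrow> hire_prob \<pi> f i j h \<le> q i j * interview_prob \<pi> f i h"
proof (induction f arbitrary: h)
  case 0
  then have "(\<lambda>a. case a of Stop H \<Rightarrow> hired_with_value k r i j h H | Interview i \<Rightarrow> 0) = (\<lambda>a. 0)"
    by (intro ext) (auto simp: hired_with_value_def split: action.splits)
  then show ?case
    using interview_prob_nonneg[of \<pi> 0 i h] valid_instance_q_nonneg[OF valid] assms by simp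
next
  case (Suc f)
  let ?valid = "\<lambda>i'. i' < n \<and> i' \<notin> fst ` set h \<and> length h < T"
  let ?F1 = "\<lambda>a. case a of Stop H \<Rightarrow> hired_with_value k r i j h H | Interview i' \<Rightarrow> if ?valid i'
    then \<Sum>j'<J. q i' j' * hire_prob \<pi> f i j (h @ [(i', r j')]) else 0"
  let ?F2 = "\<lambda>a. case a of Stop H \<Rightarrow> interviewed i h | Interview i' \<Rightarrow> if ?valid i'
    then \<Sum>j'<J. q i' j' * interview_prob \<pi> f i (h @ [(i', r j')]) else interviewed i h"
  have "?F1 a \<le> q i j * ?F2 a" for a
  proof (cases a)
    case (Stop H)
    with Suc.prems show ?thesis
      by (auto simp: hired_with_value_def interviewed_def)
  next
    case (Interview i')
    consider "\<not> ?valid i'" | "?valid i'" "i' \<noteq> i" | "i' = i"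
      using Suc.prems assms(1) by blast
    then show ?thesis
    proof cases
      case 1
      with Suc.prems show ?thesis
        unfolding Interview action.case if_not_P[OF 1] by (simp add: interviewed_def)
    next
      case 2
      have "q i' j' * hire_prob \<pi> f i j (h @ [(i', r j')])
          \<le> q i' j' * (q i j * interview_prob \<pi> f i (h @ [(i', r j')]))" if "j' < J" for j'
        using Suc.IH[of "h @ [(i', r j')]"] Suc.prems valid_instance_q_nonneg[OF valid] that 2
        by (intro mult_left_mono) auto
      then have "q i' j' * hire_prob \<pi> f i j (h @ [(i', r j')])
          \<le> q i j * (q i' j' * interview_prob \<pi> f i (h @ [(i', r j')]))" if "j' < J" for j'
        using that by (simp add: algebra_simps)
      with 2 Interview show ?thesis
        by (auto simp: sum_distrib_left intro: sum_mono)
    next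
      case 3
      with Interview Suc.prems show ?thesis
        using hire_prob_after_interview_le[OF assms Suc.prems]
        by (simp add: interviewed_def)
    qed
  qed
  then have "measure_pmf.expectation (\<pi> h) ?F1 \<le> measure_pmf.expectation (\<pi> h) (\<lambda>a. q i j * ?F2 a)"
    by (intro integral_mono integrable_mult_right integrable_action_case finite_range_if_below
        bounded_payoff_hired_with_value bounded_payoff_interviewed)
  then show ?case by simp
qed

abbreviation hire_marginal :: "policy \<Rightarrow> nat \<Rightarrow> nat \<Rightarrow> real" where
  "hire_marginal \<pi> i j \<equiv> if i < n \<and> j < J then hire_prob \<pi> T i j [] else 0"

abbreviation interview_marginal :: "policy \<Rightarrow> nat \<Rightarrow> real" where
  "interview_marginal \<pi> i \<equiv> if i < n then interview_prob \<pi> T i [] else 0"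

lemma sum_interview_prob_le: "(\<Sum>i<n. interview_prob \<pi> T i []) \<le> real T"
proof -
  have "(\<Sum>i<n. interview_prob \<pi> T i [])
      = policy_expectation n T J r q \<pi> T (\<lambda>h H. \<Sum>i<n. interviewed i h) (\<lambda>h. \<Sum>i<n. interviewed i h) []"
    by (rule policy_expectation_sum[symmetric]) (auto intro: bounded_payoff_interviewed)
  also have "\<dots> \<le> real T"
    by (rule policy_expectation_le_const[where Inv = "feasible_hist n T J r", OF valid_instance_q_nonneg[OF valid] valid_instance_q_sum[OF valid]
          _ _ _ bounded_payoff_sum feasible_hist_Nil])
       (auto intro: feasible_hist_snoc sum_interviewed_le bounded_payoff_interviewed)
  finally show ?thesis .
qed

lemma sum_hire_prob_le: "(\<Sum>i<n. \<Sum>j<J. hire_prob \<pi> T i j []) \<le> real k"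
proof -
  have "(\<Sum>i<n. \<Sum>j<J. hire_prob \<pi> T i j [])
      = policy_expectation n T J r q \<pi> T (\<lambda>h H. \<Sum>i<n. \<Sum>j<J. hired_with_value k r i j h H) (\<lambda>h. 0) []"
    by (simp add: policy_expectation_sum_stop bounded_payoff_sum bounded_payoff_hired_with_value)
  also have "\<dots> \<le> real k"
    by (rule policy_expectation_le_const[where Inv = "feasible_hist n T J r", OF valid_instance_q_nonneg[OF valid] valid_instance_q_sum[OF valid]
          _ _ _ _ feasible_hist_Nil])
       (auto intro!: feasible_hist_snoc sum_hired_with_value_le valid_instance_r_inj[OF valid] bounded_payoff_sum bounded_payoff_hired_with_value)
  finally show ?thesis .
qed

lemma lp_feasible_policy_marginals:
  "lp_feasible n T k J q (hire_marginal \<pi>) (interview_marginal \<pi>)"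
  unfolding lp_feasible_def
  using hire_prob_nonneg interview_prob_nonneg interview_prob_le_1 sum_interview_prob_le sum_hire_prob_le
    hire_prob_le_interview_prob[of _ _ "[]"]
  by (auto simp: mult.commute)

lemma policy_reward_le_lp_obj: "policy_reward n T k J r q \<pi> \<le> lp_obj n J r (hire_marginal \<pi>)"
proof -
  have "policy_reward n T k J r q \<pi> = policy_expectation n T J r q \<pi> T (stop_value k) (\<lambda>h. 0) []"
    by (simp add: policy_reward_def pol_eval_eq_policy_expectation)
  also have "\<dots> \<le> policy_expectation n T J r q \<pi> T
      (\<lambda>h H. \<Sum>i<n. \<Sum>j<J. r j * hired_with_value k r i j h H) (\<lambda>h. 0) []"
    by (rule policy_expectation_mono[where Inv = "feasible_hist n T J r", OF valid_instance_q_nonneg[OF valid] _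
          _ _ bounded_payoff_stop_value _ feasible_hist_Nil])
       (auto intro: feasible_hist_snoc simp: stop_value_eq_sum_hired_with_value[OF _ valid_instance_r_inj[OF valid]]
             intro!: bounded_payoff_sum bounded_payoff_scale bounded_payoff_hired_with_value)
  also have "\<dots> = (\<Sum>i<n. \<Sum>j<J. r j * hire_prob \<pi> T i j [])"
    by (simp add: policy_expectation_sum_stop policy_expectation_scale_stop bounded_payoff_sum
        bounded_payoff_scale bounded_payoff_hired_with_value)
  also have "\<dots> = lp_obj n J r (hire_marginal \<pi>)"
    by (simp add: lp_obj_def)
  finally show ?thesis .
qed

lemma opt_ptk_le_lp_value:
  assumes "lp_optimal n T k J r q x y"
  shows "opt_ptk n T k J r q \<le> lp_value n T k J r q"
  unfolding opt_ptk_def lp_value_eq_lp_obj[OF assms]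
proof (rule cSUP_least)
  fix \<pi>
  have "policy_reward n T k J r q \<pi> \<le> lp_obj n J r (hire_marginal \<pi>)"
    by (rule policy_reward_le_lp_obj)
  also have "\<dots> \<le> lp_obj n J r x"
    using assms lp_feasible_policy_marginals by (auto simp: lp_optimal_def)
  finally show "policy_reward n T k J r q \<pi> \<le> lp_obj n J r x" .
qed simp

end

section \<open>Analysis of the policy ALG\<close>

lemma lp_optimal_feasible: "lp_optimal n T k J r q x y \<Longrightarrow> lp_feasible n T k J q x y"
  by (simp add: lp_optimal_def)

lemma alg_order_okD:
  "alg_order_ok n v \<sigma> \<Longrightarrow> S \<subseteq> {..<n} \<Longrightarrow> set (\<sigma> S) = S \<and> distinct (\<sigma> S) \<and> sorted_wrt (\<lambda>a b. v b \<le> v a) (\<sigma> S)"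
  by (simp add: alg_order_ok_def)

lemma ones_Un_fractional_subset:
  "set_option e \<subseteq> fractional n y \<Longrightarrow> ones n y \<union> set_option e \<subseteq> {i. i < n \<and> 0 < y i}"
  by (auto simp: ones_def fractional_def)

lemma expected_hires_insert:
  assumes "distinct L1" "set L1 = insert a S" "distinct L0" "set L0 = S" "a \<notin> S"
  shows "expected_hires k (map p (filter P L1)) h
       = expected_hires k (map p (filter P L0)) h
         + (if P a then p a else 0) * expected_hires_gain k (map p (filter P L0)) h"
proof -
  have "mset L1 = add_mset a (mset L0)"
    using assms by (metis mset_set_set finite_set mset_set.insert)
  then have perm: "mset (map p (filter P L1))
      = (if P a then mset (p a # map p (filter P L0)) else mset (map p (filter P L0)))"
    by (simp add: mset_filter)
  show ?thesis
  proof (cases "P a")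
    case True
    with perm have eq: "mset (map p (filter P L1)) = mset (p a # map p (filter P L0))"
      by simp
    from True show ?thesis
      unfolding expected_hires_perm[OF eq] expected_hires_Cons by simp
  next
    case False
    with perm have eq: "mset (map p (filter P L1)) = mset (map p (filter P L0))"
      by simp
    from False show ?thesis
      by (simp add: expected_hires_perm[OF eq])
  qed
qed

lemma sum_list_filter_distinct:
  fixes p :: "nat \<Rightarrow> real"
  assumes "distinct L"
  shows "sum_list (map p (filter P L)) = (\<Sum>i\<in>set L. if P i then p i else 0)"
  using assms by (simp add: sum_list_distinct_conv_sum_set sum.inter_filter[symmetric])

context
  fixes n T k J :: nat and r :: "nat \<Rightarrow> real" and q :: "nat \<Rightarrow> nat \<Rightarrow> real"
    and x :: "nat \<Rightarrow> nat \<Rightarrow> real" and y :: "nat \<Rightarrow> real"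
  assumes valid: "valid_instance n T k J r q" and feas: "lp_feasible n T k J q x y"
begin

lemma y_mul_alg_p: "i < n \<Longrightarrow> y i * alg_p J x y i = (\<Sum>j<J. x i j)"
  using lp_feasibleD(3,4)[OF feas, of i] by (auto simp: alg_p_def intro!: sum.neutral order.antisym)

lemma alg_p_bounds: "i < n \<Longrightarrow> 0 \<le> alg_p J x y i \<and> alg_p J x y i \<le> 1"
proof -
  assume i: "i < n"
  have "(\<Sum>j<J. x i j) \<le> (\<Sum>j<J. y i * q i j)"
    using lp_feasibleD(4)[OF feas i] by (intro sum_mono) auto
  also have "\<dots> = y i"
    using valid_instance_q_sum[OF valid] i by (simp add: sum_distrib_left[symmetric])
  finally have "(\<Sum>j<J. x i j) \<le> y i" .
  moreover have "0 \<le> (\<Sum>j<J. x i j)"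
    using lp_feasibleD(3)[OF feas i] by (auto intro!: sum_nonneg)
  ultimately show ?thesis
    using lp_feasibleD(1)[OF feas i] by (auto simp: alg_p_def divide_le_eq_1)
qed

lemma alg_v_nonneg: "i < n \<Longrightarrow> 0 \<le> alg_v J r x i"
  unfolding alg_v_def Let_def using lp_feasibleD(3)[OF feas] valid_instance_r_nonneg[OF valid]
  by (auto intro!: divide_nonneg_nonneg sum_nonneg)

lemma y_mul_alg_p_mul_alg_v: "i < n \<Longrightarrow> y i * alg_p J x y i * alg_v J r x i = (\<Sum>j<J. r j * x i j)"
proof -
  assume i: "i < n"
  show ?thesis
  proof (cases "(\<Sum>j<J. x i j) = 0")
    case True
    then have "\<forall>j<J. x i j = 0"
      using lp_feasibleD(3)[OF feas i] by (subst (asm) sum_nonneg_eq_0_iff) auto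
    then show ?thesis
      by (simp add: alg_v_def)
  qed (simp add: y_mul_alg_p[OF i] alg_v_def)
qed

lemma q_mul_alg_hire_prob: "i < n \<Longrightarrow> j < J \<Longrightarrow> 0 < y i \<Longrightarrow> q i j * alg_hire_prob q x y i j = x i j / y i"
  using lp_feasibleD(3,4)[OF feas, of i j] by (auto simp: alg_hire_prob_def)

lemma sum_y_alg_p_le: "(\<Sum>i<n. if P i then y i * alg_p J x y i else 0) \<le> real k"
proof -
  have "(\<Sum>i<n. if P i then y i * alg_p J x y i else 0) \<le> (\<Sum>i<n. y i * alg_p J x y i)"
    using lp_feasibleD(1)[OF feas] alg_p_bounds by (intro sum_mono) auto
  also have "\<dots> = (\<Sum>i<n. \<Sum>j<J. x i j)"
    by (simp add: y_mul_alg_p)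
  also have "\<dots> \<le> real k"
    using feas by (simp add: lp_feasible_def)
  finally show ?thesis .
qed

lemma sum_y_alg_p_split:
  "(\<Sum>i<n. if P i then y i * alg_p J x y i else 0)
   = (\<Sum>i\<in>ones n y. if P i then alg_p J x y i else 0)
     + (\<Sum>a\<in>fractional n y. y a * (if P a then alg_p J x y a else 0))"
proof -
  have "(if P i then y i * alg_p J x y i else 0)
      = (if i \<in> ones n y then (if P i then alg_p J x y i else 0) else 0)
        + (if i \<in> fractional n y then y i * (if P i then alg_p J x y i else 0) else 0)" if "i < n" for i
    using that lp_feasibleD(1,2)[OF feas that] by (auto simp: ones_def fractional_def alg_p_def)
  then have "(\<Sum>i<n. if P i then y i * alg_p J x y i else 0)
      = (\<Sum>i\<in>{..<n} \<inter> ones n y. if P i then alg_p J x y i else 0)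
        + (\<Sum>a\<in>{..<n} \<inter> fractional n y. y a * (if P a then alg_p J x y a else 0))"
    by (simp add: sum.distrib sum.inter_restrict)
  also have "{..<n} \<inter> ones n y = ones n y"
    by (auto simp: ones_def)
  also have "{..<n} \<inter> fractional n y = fractional n y"
    by (auto simp: fractional_def)
  finally show ?thesis .
qed

text \<open>Averaged over the value of candidate \<open>i\<close>, ALG hires it with probability
  \<open>alg_p i\<close> and then gains \<open>alg_v i\<close> on average.\<close>

lemma alg_proc_eq_expected_reward:
  "set L \<subseteq> {i. i < n \<and> 0 < y i} \<Longrightarrow>
   alg_proc k J r q x y L h = expected_reward k (alg_p J x y) (alg_v J r x) L h"
proof (induction L arbitrary: h)
  case (Cons i L)
  then have i: "i < n" "0 < y i" by auto
  let ?h = "alg_hire_prob q x y i" and ?p = "alg_p J x y i" and ?v = "alg_v J r x i"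
  have hire: "(\<Sum>j<J. q i j * ?h j) = ?p"
    using q_mul_alg_hire_prob i by (simp add: alg_p_def sum_divide_distrib)
  have gain: "(\<Sum>j<J. q i j * ?h j * r j) = ?p * ?v"
  proof -
    have "y i * (\<Sum>j<J. q i j * ?h j * r j) = (\<Sum>j<J. r j * x i j)"
      using q_mul_alg_hire_prob i by (simp add: sum_distrib_left mult.commute)
    also have "\<dots> = y i * (?p * ?v)"
      using y_mul_alg_p_mul_alg_v[OF i(1)] by (simp add: mult.assoc)
    finally show ?thesis
      using i(2) by simp
  qed
  have "(\<Sum>j<J. q i j * (?h j * (r j + A1) + (1 - ?h j) * A0)) = ?p * (?v + A1) + (1 - ?p) * A0" for A1 A0
  proof -
    have "(\<Sum>j<J. q i j * (?h j * (r j + A1) + (1 - ?h j) * A0))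
        = (\<Sum>j<J. q i j * ?h j * r j + q i j * ?h j * (A1 - A0) + q i j * A0)"
      by (intro sum.cong) (auto simp: algebra_simps)
    also have "\<dots> = (\<Sum>j<J. q i j * ?h j * r j) + (\<Sum>j<J. q i j * ?h j) * (A1 - A0) + (\<Sum>j<J. q i j) * A0"
      by (simp add: sum.distrib sum_distrib_right)
    finally
    show ?thesis
      using hire gain valid_instance_q_sum[OF valid] i(1) by (simp add: algebra_simps)
  qed
  with Cons show ?case by simp
qed simp

end

context
  fixes n T k J :: nat and r :: "nat \<Rightarrow> real" and q :: "nat \<Rightarrow> nat \<Rightarrow> real"
    and x :: "nat \<Rightarrow> nat \<Rightarrow> real" and y :: "nat \<Rightarrow> real" and \<sigma> :: "nat set \<Rightarrow> nat list"
  assumes valid: "valid_instance n T k J r q" and feas: "lp_feasible n T k J q x y"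
    and order: "alg_order_ok n (alg_v J r x) \<sigma>"
begin


lemma expected_hires_scenario:
  assumes "set_option e \<subseteq> fractional n y"
  shows "expected_hires k (map (alg_p J x y) (filter P (\<sigma> (ones n y \<union> set_option e)))) 0
       = expected_hires k (map (alg_p J x y) (filter P (\<sigma> (ones n y)))) 0
         + (\<Sum>a\<in>set_option e. if P a then alg_p J x y a else 0)
           * expected_hires_gain k (map (alg_p J x y) (filter P (\<sigma> (ones n y)))) 0"
proof (cases e)
  case (Some a)
  have ones_sub: "ones n y \<subseteq> {..<n}"
    by (auto simp: ones_def)
  from Some assms have "a < n" "a \<notin> ones n y"
    by (auto simp: fractional_def ones_def)
  then have "expected_hires k (map (alg_p J x y) (filter P (\<sigma> (insert a (ones n y))))) 0
      = expected_hires k (map (alg_p J x y) (filter P (\<sigma> (ones n y)))) 0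
        + (if P a then alg_p J x y a else 0) * expected_hires_gain k (map (alg_p J x y) (filter P (\<sigma> (ones n y)))) 0"
    using alg_order_okD[OF order, of "insert a (ones n y)"] alg_order_okD[OF order ones_sub] ones_sub
    by (intro expected_hires_insert) auto
  then show ?thesis
    by (simp add: Some)
qed simp

text \<open>\<open>Ws\<close> is the distribution of the interviewed set: with probability \<open>w\<close> it is
  \<open>ones n y\<close> plus the optional fractional candidate \<open>e\<close>. The marginal condition says that
  each fractional \<open>a\<close> is added with probability \<open>y a\<close>.\<close>

lemma alg_hires_ge:
  fixes Ws :: "(real \<times> nat option) list"
  assumes weights: "\<And>w e. (w, e) \<in> set Ws \<Longrightarrow> 0 \<le> w \<and> set_option e \<subseteq> fractional n y"
    and total: "(\<Sum>(w, e)\<leftarrow>Ws. w) = 1"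
    and marginals: "\<And>g. (\<Sum>a\<in>fractional n y. y a * g a) = (\<Sum>(w, e)\<leftarrow>Ws. w * (\<Sum>a\<in>set_option e. g a))"
  shows "ptk_ratio k * (\<Sum>i<n. if P i then y i * alg_p J x y i else 0)
       \<le> (\<Sum>(w, e)\<leftarrow>Ws. w * expected_hires k (map (alg_p J x y) (filter P (\<sigma> (ones n y \<union> set_option e)))) 0)"
proof -
  let ?p = "alg_p J x y"
  define L0 where "L0 = map ?p (filter P (\<sigma> (ones n y)))"
  define g where "g = (\<lambda>a. if P a then ?p a else 0)"
  define u where "u = (\<Sum>a\<in>fractional n y. y a * g a)"
  have ones_sub: "ones n y \<subseteq> {..<n}"
    by (auto simp: ones_def)
  have g_bounds: "0 \<le> g a \<and> g a \<le> 1" if "a < n" for a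
    using alg_p_bounds[OF valid feas that] by (simp add: g_def)
  note scenario = expected_hires_scenario[of _ P, folded L0_def g_def]
  have "(\<Sum>(w, e)\<leftarrow>Ws. w * expected_hires k (map ?p (filter P (\<sigma> (ones n y \<union> set_option e)))) 0)
      = (\<Sum>(w, e)\<leftarrow>Ws. w * expected_hires k L0 0 + w * (\<Sum>a\<in>set_option e. g a) * expected_hires_gain k L0 0)"
    using weights scenario by (intro arg_cong[where f = sum_list] map_cong) (auto simp: algebra_simps)
  also have "\<dots> = expected_hires k L0 0 * (\<Sum>(w, e)\<leftarrow>Ws. w)
      + (\<Sum>(w, e)\<leftarrow>Ws. w * (\<Sum>a\<in>set_option e. g a)) * expected_hires_gain k L0 0"
    by (induction Ws) (auto simp: algebra_simps)
  also have "\<dots> = expected_hires k L0 0 + u * expected_hires_gain k L0 0"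
    using total marginals[of g] by (simp add: u_def)
  also have "\<dots> = expected_hires k (u # L0) 0"
    by (simp only: expected_hires_Cons)
  finally have rhs: "(\<Sum>(w, e)\<leftarrow>Ws. w * expected_hires k (map ?p (filter P (\<sigma> (ones n y \<union> set_option e)))) 0)
      = expected_hires k (u # L0) 0" .
  have lhs: "(\<Sum>i<n. if P i then y i * ?p i else 0) = u + sum_list L0"
    using sum_y_alg_p_split[OF valid feas, of P] alg_order_okD[OF order ones_sub]
    by (simp add: L0_def u_def g_def sum_list_filter_distinct)
  have "0 \<le> u"
    using g_bounds lp_feasibleD(1)[OF feas] by (auto simp: u_def fractional_def intro!: sum_nonneg)
  moreover have "u \<le> 1"
  proof -
    have "u = (\<Sum>(w, e)\<leftarrow>Ws. w * (\<Sum>a\<in>set_option e. g a))"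
      by (simp add: u_def marginals)
    also have "\<dots> \<le> (\<Sum>(w, e)\<leftarrow>Ws. w)"
    proof (rule sum_list_mono, clarify)
      fix w e assume "(w, e) \<in> set Ws"
      moreover from this have "(\<Sum>a\<in>set_option e. g a) \<le> 1"
        using weights g_bounds by (cases e) (auto simp: fractional_def)
      ultimately show "w * (\<Sum>a\<in>set_option e. g a) \<le> w"
        using weights mult_left_le by blast
    qed
    finally show ?thesis using total by simp
  qed
  moreover have "\<forall>v\<in>set L0. 0 \<le> v \<and> v \<le> 1"
    using alg_p_bounds[OF valid feas] alg_order_okD[OF order ones_sub] ones_sub by (auto simp: L0_def)
  ultimately have "ptk_ratio k * sum_list (u # L0) \<le> expected_hires k (u # L0) 0"
    using lhs sum_y_alg_p_le[OF valid feas, of P] valid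
    by (intro expected_hires_ge_ratio valid_instance_k_pos) auto
  with lhs rhs show ?thesis
    by (simp add: add.commute)
qed

lemma alg_reward_ge_of_scenarios:
  fixes Ws :: "(real \<times> nat option) list"
  assumes opt: "lp_optimal n T k J r q x y"
    and reward: "alg_reward n k J r q x y \<sigma>
      = (\<Sum>(w, e)\<leftarrow>Ws. w * alg_proc k J r q x y (\<sigma> (ones n y \<union> set_option e)) 0)"
    and weights: "\<And>w e. (w, e) \<in> set Ws \<Longrightarrow> 0 \<le> w \<and> set_option e \<subseteq> fractional n y"
    and total: "(\<Sum>(w, e)\<leftarrow>Ws. w) = 1"
    and marginals: "\<And>g. (\<Sum>a\<in>fractional n y. y a * g a) = (\<Sum>(w, e)\<leftarrow>Ws. w * (\<Sum>a\<in>set_option e. g a))"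
  shows "ptk_ratio k * lp_value n T k J r q \<le> alg_reward n k J r q x y \<sigma>"
proof -
  let ?p = "alg_p J x y" and ?v = "alg_v J r x"
  define Ls where "Ls = map (\<lambda>(w, e). (w, \<sigma> (ones n y \<union> set_option e))) Ws"
  have sets: "set L \<subseteq> {i. i < n \<and> 0 < y i} \<and> sorted_wrt (\<lambda>a b. ?v b \<le> ?v a) L" if "(w, L) \<in> set Ls" for w L
  proof -
    from that obtain e where "(w, e) \<in> set Ws" "L = \<sigma> (ones n y \<union> set_option e)"
      by (auto simp: Ls_def)
    moreover from this have "ones n y \<union> set_option e \<subseteq> {i. i < n \<and> 0 < y i}"
      using weights ones_Un_fractional_subset by blast
    ultimately show ?thesis
      using alg_order_okD[OF order, of "ones n y \<union> set_option e"] by auto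
  qed
  have Ls_sum: "(\<Sum>(w, L)\<leftarrow>Ls. F w L) = (\<Sum>(w, e)\<leftarrow>Ws. F w (\<sigma> (ones n y \<union> set_option e)))"
    for F :: "real \<Rightarrow> nat list \<Rightarrow> real"
    unfolding Ls_def by (induction Ws) auto
  have "ptk_ratio k * (\<Sum>i<n. y i * ?p i * ?v i) \<le> (\<Sum>(w, L)\<leftarrow>Ls. w * expected_reward k ?p ?v L 0)"
  proof (rule expected_reward_ge_of_hires)
    fix P
    show "ptk_ratio k * (\<Sum>i<n. if P i then y i * ?p i else 0)
        \<le> (\<Sum>(w, L)\<leftarrow>Ls. w * expected_hires k (map ?p (filter P L)) 0)"
      using alg_hires_ge[OF weights total marginals, of P] by (simp only: Ls_sum)
  qed (use sets alg_v_nonneg[OF valid feas] in auto)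
  also have "\<dots> = (\<Sum>(w, L)\<leftarrow>Ls. w * alg_proc k J r q x y L 0)"
    using sets alg_proc_eq_expected_reward[OF valid feas]
    by (intro arg_cong[where f = sum_list] map_cong) auto
  also have "\<dots> = alg_reward n k J r q x y \<sigma>"
    by (simp only: Ls_sum reward)
  also have "(\<Sum>i<n. y i * ?p i * ?v i) = lp_value n T k J r q"
    using y_mul_alg_p_mul_alg_v[OF valid feas] lp_value_eq_lp_obj[OF opt] by (simp add: lp_obj_def)
  finally show ?thesis .
qed

lemma alg_Y_eq:
  "alg_Y n y = (if card (fractional n y) = 0 then return_pmf (ones n y)
     else if card (fractional n y) = 1 then
       map_pmf (\<lambda>b. if b then insert (Min (fractional n y)) (ones n y) else ones n y)
         (bernoulli_pmf (y (Min (fractional n y))))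
     else if card (fractional n y) = 2 then
       map_pmf (\<lambda>b. if b then insert (Min (fractional n y)) (ones n y) else insert (Max (fractional n y)) (ones n y))
         (bernoulli_pmf (y (Min (fractional n y))))
     else return_pmf {})"
  unfolding alg_Y_def Let_def fractional_def ones_def ..

lemma alg_reward_ge:
  assumes opt: "lp_optimal n T k J r q x y" and bfs: "lp_bfs n T k J q x y"
  shows "ptk_ratio k * lp_value n T k J r q \<le> alg_reward n k J r q x y \<sigma>"
proof -
  let ?F = "fractional n y"
  have y_frac: "0 < y a \<and> y a < 1" if "a \<in> ?F" for a
    using that by (simp add: fractional_def)
  have "card ?F = 0 \<or> card ?F = 1 \<or> card ?F = 2"
    using lp_bfs_card_fractional[OF bfs] by linarith
  then consider "?F = {}" | a where "?F = {a}" | a b where "?F = {a, b}" "a < b"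
  proof (elim disjE)
    assume "card ?F = 2"
    then obtain a b where "?F = {a, b}" "a \<noteq> b"
      by (auto simp: card_2_iff)
    then show thesis
      using that(3)[of a b] that(3)[of b a] by (cases "a < b") (auto simp: insert_commute)
  qed (auto simp: card_1_singleton_iff)
  then show ?thesis
  proof cases
    case 1
    then show ?thesis
      by (intro alg_reward_ge_of_scenarios[OF opt, where Ws = "[(1, None)]"])
         (auto simp: alg_reward_def alg_Y_eq)
  next
    case (2 a)
    with y_frac[of a] show ?thesis
      by (intro alg_reward_ge_of_scenarios[OF opt, where Ws = "[(y a, Some a), (1 - y a, None)]"])
         (auto simp: alg_reward_def alg_Y_eq)
  next
    case (3 a b)
    moreover from 3 have "y a + y b = 1"
      using lp_bfs_fractional_pair[OF bfs, of a b] by simp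
    then have "c * y a + c * y b = c" for c
      by (simp add: distrib_left[symmetric])
    ultimately show ?thesis
      using y_frac[of a] y_frac[of b]
      by (intro alg_reward_ge_of_scenarios[OF opt, where Ws = "[(y a, Some a), (1 - y a, Some b)]"])
         (auto simp: alg_reward_def alg_Y_eq algebra_simps \<open>\<And>c. c * y a + c * y b = c\<close>)
  qed
qed

end

theorem theorem4p1:
  fixes n T k J :: nat and r :: "nat \<Rightarrow> real" and q :: "nat \<Rightarrow> nat \<Rightarrow> real"
    and x :: "nat \<Rightarrow> nat \<Rightarrow> real" and y :: "nat \<Rightarrow> real" and \<sigma> :: "nat set \<Rightarrow> nat list"
  assumes "valid_instance n T k J r q"
    and "lp_optimal n T k J r q x y"
    and "lp_bfs n T k J q x y"
    and "alg_order_ok n (alg_v J r x) \<sigma>"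
  shows "alg_reward n k J r q x y \<sigma> \<ge> (1 - exp (- real k) * real k ^ k / fact k) * lp_value n T k J r q
       \<and> (1 - exp (- real k) * real k ^ k / fact k) * lp_value n T k J r q
           \<ge> (1 - exp (- real k) * real k ^ k / fact k) * opt_ptk n T k J r q"
proof
  show "ptk_ratio k * lp_value n T k J r q \<le> alg_reward n k J r q x y \<sigma>"
    using alg_reward_ge[OF assms(1) lp_optimal_feasible[OF assms(2)] assms(4,2,3)] .
  have "opt_ptk n T k J r q \<le> lp_value n T k J r q"
    using opt_ptk_le_lp_value[OF assms(1,2)] .
  then show "ptk_ratio k * opt_ptk n T k J r q \<le> ptk_ratio k * lp_value n T k J r q"
    using ptk_ratio_nonneg by (rule mult_left_mono)
qed

end
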